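(* Let $m\ge1$ be fixed. For each $n$ let $n_0=n$, $n_1=n_1(n),\dots,n_m=n_m(n)=p$ be positive integers with $\lim_{n\to\infty} n/n_q(n)=y_q>0$ for $q=1,\dots,m$. Let $\mathbf X^{(q)}=\big(n_q^{-1/2}X^{(q)}_{jk}\big)$, $q=1,\dots,m$, be independent random matrices of sizes $n_{q-1}\times n_q$, where the $X^{(q)}_{jk}$ are independent complex random variables with $\mathbf E X^{(q)}_{jk}=0$, $\mathbf E|X^{(q)}_{jk}|^2=1$. Let $\mathbb F:\mathcal M_{n_0\times n_1}\times\cdots\times\mathcal M_{n_{m-1}\times n_m}\to\mathcal M_{n\times p}$ be a map, and write $\mathbf F_{\mathbf Z}=\mathbb F(\mathbf Z^{(1)},\dots,\mathbf Z^{(m)})$. Assume: (i) (Lindeberg condition) for every $\tau>0$, $L_n(\tau):=\frac1{n^2}\sum_{q=1}^m\sum_{j=1}^{n_{q-1}}\sum_{k=1}^{n_q}\mathbf E|X^{(q)}_{jk}|^2\mathbb I\{|X^{(q)}_{jk}|>\tau\sqrt n\}\to0$ as $n\to\infty$; (ii) (rank condition) there is a constant $C(\mathbb F)$ such that for all tuples $(\mathbf A^{(q)}),(\mathbf B^{(q)})$, $\operatorname{rank}\{\mathbb F(\mathbf A^{(1)},\dots,\mathbf A^{(m)})-\mathbb F(\mathbf B^{(1)},\dots,\mathbf B^{(m)})\}\le C(\mathbb F)\sum_{q=1}^m\operatorname{rank}\{\mathbf A^{(q)}-\mathbf B^{(q)}\}$. Let $(\tau_n)$ be a sequence with $\tau_n\to0$,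 $L_n(\tau_n)\tau_n^{-4}\to0$ and $\tau_n\ge n^{-1/3}$, and let $\widehat{\mathbf X}^{(q)}=\big(n_q^{-1/2}\widehat X^{(q)}_{jk}\big)$ with $\widehat X^{(q)}_{jk}=X^{(q)}_{jk}\mathbb I\{|X^{(q)}_{jk}|\le\tau_n\sqrt n\}$. Let $\mathbf B$ be a non-random $n\times p$ matrix, let $s_1(\mathbf X)\ge\dots\ge s_n(\mathbf X)$ and $s_1(\widehat{\mathbf X})\ge\dots\ge s_n(\widehat{\mathbf X})$ be the singular values of $\mathbf F_{\mathbf X}+\mathbf B$ and $\mathbf F_{\widehat{\mathbf X}}+\mathbf B$, and set $\mathcal F_{\mathbf X}(x)=\frac1n\sum_{j}\mathbb I\{s_j^2(\mathbf X)\le x\}$, $\mathcal F_{\widehat{\mathbf X}}(x)=\frac1n\sum_j\mathbb I\{s_j^2(\widehat{\mathbf X})\le x\}$, $m_{\mathbf X}(z)=\frac1n\sum_j(s_j^2(\mathbf X)-z)^{-1}$, $m_{\widehat{\mathbf X}}(z)=\frac1n\sum_j(s_j^2(\widehat{\mathbf X})-z)^{-1}$. Then there is a constant $C$ such that $$\mathbf E\sup_x|\mathcal F_{\mathbf X}(x)-\mathcal F_{\widehat{\mathbf X}}(x)|\le C\tau_n^2,$$ and for any $z=u+iv$ with $v>0$, $\mathbf E|m_{\mathbf X}(z)-m_{\widehat{\mathbf X}}(z)|\le Cv^{-1}\tau_n^2$.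
   Context: $\mathcal M_{a\times b}$ denotes the space of complex $a\times b$ matrices. *)

theory Defs
  imports "HOL-Probability.Probability" "Jordan_Normal_Form.Jordan_Normal_Form" "Jordan_Normal_Form.DL_Rank" "Jordan_Normal_Form.Schur_Decomposition"
begin

definition mrank :: "complex mat \<Rightarrow> nat" where
  "mrank A = vec_space.rank (dim_row A) A"

text \<open>Squared singular values of M (n x p), i.e. the eigenvalues of M M^* counted with
  multiplicity (a multiset of n complex numbers, all real and nonnegative).\<close>
definition sq_singvals :: "complex mat \<Rightarrow> complex multiset" where
  "sq_singvals M = proots (char_poly (M * mat_adjoint M))"

definition esd :: "nat \<Rightarrow> complex mat \<Rightarrow> real \<Rightarrow> real" where
  "esd n M x = real (size (filter_mset (\<lambda>l. Re l \<le> x) (sq_singvals M))) / real n"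

definition stieltjes :: "nat \<Rightarrow> complex mat \<Rightarrow> complex \<Rightarrow> complex" where
  "stieltjes n M z = (\<Sum>\<^sub># (image_mset (\<lambda>l. 1 / (l - z)) (sq_singvals M))) / of_nat n"

text \<open>Lindeberg ratio L_n(tau); X n q j k is the (j,k) entry (0-based) of the unnormalised
  q-th matrix at stage n, N n q = n_q(n).\<close>
definition lindeberg ::
  "(nat \<Rightarrow> 'a measure) \<Rightarrow> nat \<Rightarrow> (nat \<Rightarrow> nat \<Rightarrow> nat) \<Rightarrow>
   (nat \<Rightarrow> nat \<Rightarrow> nat \<Rightarrow> nat \<Rightarrow> 'a \<Rightarrow> complex) \<Rightarrow> nat \<Rightarrow> real \<Rightarrow> real" where
  "lindeberg M m N X n \<tau> = (1 / (real n)^2) *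
     (\<Sum>q\<in>{1..m}. \<Sum>j<N n (q - 1). \<Sum>k<N n q.
        prob_space.expectation (M n) (\<lambda>\<omega>. (cmod (X n q j k \<omega>))^2 *
            indicator {t. t > \<tau> * sqrt (real n)} (cmod (X n q j k \<omega>))))"

definition rmat :: "(nat \<Rightarrow> nat \<Rightarrow> nat) \<Rightarrow> (nat \<Rightarrow> nat \<Rightarrow> nat \<Rightarrow> nat \<Rightarrow> 'a \<Rightarrow> complex)
   \<Rightarrow> nat \<Rightarrow> 'a \<Rightarrow> nat \<Rightarrow> complex mat" where
  "rmat N X n \<omega> q = mat (N n (q - 1)) (N n q)
      (\<lambda>(j, k). X n q j k \<omega> / complex_of_real (sqrt (real (N n q))))"

definition trunc :: "(nat \<Rightarrow> real) \<Rightarrow> (nat \<Rightarrow> nat \<Rightarrow> nat \<Rightarrow> nat \<Rightarrow> 'a \<Rightarrow> complex)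
   \<Rightarrow> nat \<Rightarrow> nat \<Rightarrow> nat \<Rightarrow> nat \<Rightarrow> 'a \<Rightarrow> complex" where
  "trunc \<tau> X n q j k \<omega> = (if cmod (X n q j k \<omega>) \<le> \<tau> n * sqrt (real n) then X n q j k \<omega> else 0)"

end

theory Submission
  imports Defs
begin

text \<open>Truncation changes only the entries with \<open>|X_jk| > \<tau>_n sqrt n\<close>, so by the rank condition the
  matrices \<open>F_X + B\<close> and \<open>F_X' + B\<close> (\<open>X'\<close> the truncated entries) differ by a matrix whose rank is at
  most \<open>C(F)\<close> times the number of such entries. A perturbation of rank \<open>r\<close> changes the number of
  squared singular values below any level by at most \<open>r\<close> (a Courant-Fischer argument based on the
  spectral theorem for \<open>M M\<^sup>*\<close>), so the empirical distribution functions differ by at most \<open>r/n\<close>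
  uniformly; and since \<open>1/(\<lambda> - z)\<close> splits into five monotone functions of \<open>\<lambda>\<close> bounded by \<open>1/v\<close>,
  the Stieltjes transforms differ by at most \<open>10 r/(n v)\<close>. By Markov's inequality the expected
  number of large entries is at most \<open>n L_n(\<tau>_n) / \<tau>_n\<^sup>2\<close>, and \<open>L_n(\<tau>_n) / \<tau>_n\<^sup>4\<close> is bounded.\<close>

section \<open>Adjoints and unitary matrices\<close>

lemma mat_adjoint_eq_mat:
  "mat_adjoint (A::complex mat) = mat (dim_col A) (dim_row A) (\<lambda>(i,j). cnj (A $$ (j,i)))"
  unfolding mat_adjoint_def by (rule eq_matI, auto simp: mat_of_rows_def conjugate_vec_def)

lemma mat_adjoint_carrier [simp]:
  "A \<in> carrier_mat a b \<Longrightarrow> mat_adjoint (A::complex mat) \<in> carrier_mat b a"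
  by (simp add: mat_adjoint_eq_mat)

lemma index_mat_adjoint [simp]:
  "i < dim_col A \<Longrightarrow> j < dim_row A \<Longrightarrow> mat_adjoint (A::complex mat) $$ (i,j) = cnj (A $$ (j,i))"
  by (simp add: mat_adjoint_eq_mat)

lemma dim_mat_adjoint [simp]:
  "dim_row (mat_adjoint (A::complex mat)) = dim_col A"
  "dim_col (mat_adjoint (A::complex mat)) = dim_row A"
  by (simp_all add: mat_adjoint_eq_mat)

lemma mat_adjoint_mat_adjoint [simp]: "mat_adjoint (mat_adjoint (A::complex mat)) = A"
  by (rule eq_matI) auto

lemma index_mult_mat_sum:
  "A \<in> carrier_mat a b \<Longrightarrow> B \<in> carrier_mat b c \<Longrightarrow> i < a \<Longrightarrow> j < c \<Longrightarrow>
   (A * B) $$ (i,j) = (\<Sum>k<b. A $$ (i,k) * B $$ (k,j))"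
  by (simp add: scalar_prod_def atLeast0LessThan)

lemma index_mult_mat_vec_sum:
  "A \<in> carrier_mat a b \<Longrightarrow> v \<in> carrier_vec b \<Longrightarrow> i < a \<Longrightarrow>
   (A *\<^sub>v v) $ i = (\<Sum>k<b. A $$ (i,k) * v $ k)"
  by (simp add: scalar_prod_def atLeast0LessThan)

lemma mat_adjoint_mult:
  assumes A: "A \<in> carrier_mat a b" and B: "B \<in> carrier_mat b c"
  shows "mat_adjoint (A * (B::complex mat)) = mat_adjoint B * mat_adjoint A"
proof (rule eq_matI)
  fix i j assume "i < dim_row (mat_adjoint B * mat_adjoint A)" "j < dim_col (mat_adjoint B * mat_adjoint A)"
  then have i: "i < c" and j: "j < a" using A B by auto
  have "mat_adjoint (A * B) $$ (i,j) = cnj (\<Sum>k<b. A $$ (j,k) * B $$ (k,i))"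
    using index_mult_mat_sum[OF A B j i] A B i j by simp
  also have "\<dots> = (\<Sum>k<b. mat_adjoint B $$ (i,k) * mat_adjoint A $$ (k,j))"
    using A B i j by (simp add: mult.commute)
  finally show "mat_adjoint (A * B) $$ (i,j) = (mat_adjoint B * mat_adjoint A) $$ (i,j)"
    using index_mult_mat_sum[OF mat_adjoint_carrier[OF B] mat_adjoint_carrier[OF A] i j] by simp
qed (use A B in auto)

lemma mat_adjoint_mult_self:
  "M \<in> carrier_mat n p \<Longrightarrow> mat_adjoint (M * mat_adjoint M) = M * mat_adjoint (M::complex mat)"
  by (simp add: mat_adjoint_mult[of _ n p _ n])

lemma mat_adjoint_conj:
  assumes "U \<in> carrier_mat n m" "H \<in> carrier_mat n n" "mat_adjoint H = H"
  shows "mat_adjoint (mat_adjoint U * H * (U::complex mat)) = mat_adjoint U * H * U"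
  using assms by (simp add: mat_adjoint_mult[of _ m n _ m] mat_adjoint_mult[of _ m n _ n] mat_adjoint_mult[of _ n n _ m]
      assoc_mult_mat[of _ m n _ n _ m])

lemma hermitian_diag_real:
  fixes A :: "complex mat"
  assumes "mat_adjoint A = A" "A \<in> carrier_mat n n" "k < n"
  shows "A $$ (k,k) = of_real (Re (A $$ (k,k)))"
proof -
  have "cnj (A $$ (k,k)) = A $$ (k,k)" using index_mat_adjoint[of k A k] assms by simp
  then show ?thesis using complex_eq_iff[of "cnj (A $$ (k,k))"] by (simp add: complex_eq_iff)
qed

lemma mat_adjoint_minus:
  "A \<in> carrier_mat n p \<Longrightarrow> B \<in> carrier_mat n p \<Longrightarrow>
   mat_adjoint (A - B) = mat_adjoint A - mat_adjoint (B::complex mat)"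
  by (rule eq_matI) auto

lemma cscalar_prod_sum: "v \<bullet>c (u::complex vec) = (\<Sum>i<dim_vec u. v $ i * cnj (u $ i))"
  by (simp add: scalar_prod_def atLeast0LessThan)

lemma cscalar_prod_self: "v \<bullet>c (v::complex vec) = of_real (\<Sum>i<dim_vec v. (cmod (v $ i))^2)"
  unfolding cscalar_prod_sum of_real_sum by (rule sum.cong[OF refl]) (simp only: complex_norm_square)

lemma mult_mat_vec_cscalar_prod:
  fixes B :: "complex mat"
  assumes B: "B \<in> carrier_mat a b" and x: "x \<in> carrier_vec a" and y: "y \<in> carrier_vec b"
  shows "(B *\<^sub>v y) \<bullet>c x = y \<bullet>c (mat_adjoint B *\<^sub>v x)"
proof -
  have "(B *\<^sub>v y) \<bullet>c x = (\<Sum>i<a. \<Sum>j<b. B $$ (i,j) * y $ j * cnj (x $ i))"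
    unfolding cscalar_prod_sum using x
    by (intro sum.cong) (auto simp: index_mult_mat_vec_sum[OF B y] sum_distrib_right)
  also have "\<dots> = (\<Sum>j<b. y $ j * cnj (\<Sum>i<a. cnj (B $$ (i,j)) * x $ i))"
    by (subst sum.swap) (simp add: sum_distrib_left ac_simps)
  also have "\<dots> = y \<bullet>c (mat_adjoint B *\<^sub>v x)"
  proof -
    have "\<And>j. j < b \<Longrightarrow> (mat_adjoint B *\<^sub>v x) $ j = (\<Sum>i<a. cnj (B $$ (i,j)) * x $ i)"
      using index_mult_mat_vec_sum[OF mat_adjoint_carrier[OF B] x] B by simp
    then show ?thesis unfolding cscalar_prod_sum using B by simp
  qed
  finally show ?thesis .
qed

definition unitary_mat :: "nat \<Rightarrow> complex mat \<Rightarrow> bool" where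
  "unitary_mat n U \<longleftrightarrow> U \<in> carrier_mat n n \<and> mat_adjoint U * U = 1\<^sub>m n"

lemma unitary_mat_one: "unitary_mat n (1\<^sub>m n)"
proof -
  have "mat_adjoint (1\<^sub>m n) = (1\<^sub>m n :: complex mat)" by (rule eq_matI) auto
  then show ?thesis unfolding unitary_mat_def by simp
qed

lemma unitary_mat_mult_adjoint:
  assumes "unitary_mat n U" shows "U * mat_adjoint U = 1\<^sub>m n"
  using assms mat_mult_left_right_inverse[of "mat_adjoint U" n U] unfolding unitary_mat_def by auto

lemma unitary_mat_mult:
  assumes U: "unitary_mat n U" and V: "unitary_mat n V"
  shows "unitary_mat n (U * V)"
proof -
  have Uc: "U \<in> carrier_mat n n" and Vc: "V \<in> carrier_mat n n"
    using U V unfolding unitary_mat_def by auto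
  have "mat_adjoint (U * V) * (U * V) = mat_adjoint V * (mat_adjoint U * (U * V))"
    using Uc Vc by (simp add: mat_adjoint_mult[OF Uc Vc] assoc_mult_mat[of _ n n _ n _ n])
  also have "\<dots> = mat_adjoint V * V"
    using U Vc unfolding unitary_mat_def by (simp flip: assoc_mult_mat[of _ n n _ n _ n])
  also have "\<dots> = 1\<^sub>m n"
    using V unfolding unitary_mat_def by simp
  finally show ?thesis using Uc Vc unfolding unitary_mat_def by simp
qed

definition block_diag :: "complex mat \<Rightarrow> complex mat \<Rightarrow> complex mat" where
  "block_diag A D = four_block_mat A (0\<^sub>m (dim_row A) (dim_col D)) (0\<^sub>m (dim_row D) (dim_col A)) D"

lemma block_diag_carrier:
  "A \<in> carrier_mat r1 c1 \<Longrightarrow> D \<in> carrier_mat r2 c2 \<Longrightarrow> block_diag A D \<in> carrier_mat (r1 + r2) (c1 + c2)"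
  unfolding block_diag_def by simp

lemma mat_adjoint_block_diag:
  "mat_adjoint (block_diag A D) = block_diag (mat_adjoint A) (mat_adjoint D)"
  unfolding block_diag_def by (rule eq_matI) auto

lemma block_diag_mult:
  assumes "A1 \<in> carrier_mat r1 k1" "D1 \<in> carrier_mat r2 k2" "A2 \<in> carrier_mat k1 c1" "D2 \<in> carrier_mat k2 c2"
  shows "block_diag A1 D1 * block_diag A2 D2 = block_diag (A1 * A2) (D1 * D2)"
  unfolding block_diag_def using assms by (subst mult_four_block_mat[of _ r1 k1 _ k2 _ r2]) auto

lemma diagonal_mat_block_diag:
  assumes "A \<in> carrier_mat a a" "D \<in> carrier_mat d d" "diagonal_mat A" "diagonal_mat D"
  shows "diagonal_mat (block_diag A D)"
  using assms unfolding block_diag_def diagonal_mat_def by (auto simp: diff_less_mono2)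

lemma unitary_mat_block_diag:
  assumes A: "unitary_mat a A" and D: "unitary_mat d D"
  shows "unitary_mat (a + d) (block_diag A D)"
proof -
  have Ac: "A \<in> carrier_mat a a" and Dc: "D \<in> carrier_mat d d"
    using A D unfolding unitary_mat_def by auto
  have "mat_adjoint (block_diag A D) * block_diag A D = block_diag (1\<^sub>m a) (1\<^sub>m d)"
    using A D Ac Dc unfolding unitary_mat_def mat_adjoint_block_diag
    by (subst block_diag_mult) auto
  then show ?thesis
    using block_diag_carrier[OF Ac Dc] by (simp add: unitary_mat_def block_diag_def)
qed


section \<open>The spectral theorem for Hermitian matrices\<close>

lemma orthonormal_basis_extending:
  fixes v :: "complex vec"
  assumes v: "v \<in> carrier_vec n" and v0: "v \<noteq> 0\<^sub>v n"
  obtains us c where "length us = n" "set us \<subseteq> carrier_vec n"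
    "\<And>i j. i < n \<Longrightarrow> j < n \<Longrightarrow> us ! i \<bullet>c us ! j = (if i = j then 1 else 0)"
    "us ! 0 = c \<cdot>\<^sub>v v"
proof -
  interpret cof_vec_space n "TYPE(complex)" .
  define b where "b = basis_completion v"
  define ws where "ws = gram_schmidt n b"
  from basis_completion[OF v v0, folded b_def]
  have dist_b: "distinct b" and indep: "\<not> lin_dep (set b)" and b: "set b \<subseteq> carrier_vec n"
    and hdb: "hd b = v" and len_b: "length b = n" by auto
  have n: "n \<noteq> 0" using v0 v by auto
  from hdb len_b n obtain vs where bv: "b = v # vs" by (cases b) auto
  from gram_schmidt_result[OF b dist_b indep refl, folded ws_def]
  have ws: "set ws \<subseteq> carrier_vec n" "corthogonal ws" "length ws = n"
    by (auto simp: len_b)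
  from gram_schmidt_hd[OF v, of vs, folded bv] have hdws: "hd ws = v" unfolding ws_def .
  define r where "r i = Re (ws ! i \<bullet>c ws ! i)" for i
  define us where "us = map (\<lambda>i. complex_of_real (1 / sqrt (r i)) \<cdot>\<^sub>v ws ! i) [0..<n]"
  have wsc: "\<And>i. i < n \<Longrightarrow> ws ! i \<in> carrier_vec n" using ws by auto
  have r: "r i > 0" "ws ! i \<bullet>c ws ! i = of_real (r i)" if i: "i < n" for i
  proof -
    have "ws ! i \<bullet>c ws ! i \<noteq> 0" using corthogonalD[OF ws(2)] i ws(3) by auto
    moreover have "ws ! i \<bullet>c ws ! i \<ge> 0" by (rule conjugate_square_ge_0_vec)
    ultimately show "r i > 0" "ws ! i \<bullet>c ws ! i = of_real (r i)"
      by (auto simp: r_def complex_eq_iff less_eq_complex_def)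
  qed
  have orth: "us ! i \<bullet>c us ! j = (if i = j then 1 else 0)" if i: "i < n" and j: "j < n" for i j
  proof -
    have "us ! i \<bullet>c us ! j = of_real (1 / sqrt (r i) * (1 / sqrt (r j))) * (ws ! i \<bullet>c ws ! j)"
      using wsc[OF i] wsc[OF j] i j
      by (simp add: us_def conjugate_smult_vec scalar_prod_smult_distrib smult_scalar_prod_distrib)
    also have "\<dots> = (if i = j then 1 else 0)"
      using corthogonalD[OF ws(2)] ws(3) r[OF j] i j by (auto simp flip: of_real_mult)
    finally show ?thesis .
  qed
  have "us ! 0 = complex_of_real (1 / sqrt (r 0)) \<cdot>\<^sub>v v"
    using n ws(3) hdws by (cases ws) (auto simp: us_def)
  moreover have "length us = n" "set us \<subseteq> carrier_vec n" using wsc by (auto simp: us_def)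
  ultimately show ?thesis using that orth by blast
qed

lemma unitary_mat_with_first_col:
  fixes v :: "complex vec"
  assumes v: "v \<in> carrier_vec n" and v0: "v \<noteq> 0\<^sub>v n"
  obtains W c where "unitary_mat n W" "col W 0 = c \<cdot>\<^sub>v v"
proof -
  obtain us c where len: "length us = n" and us: "set us \<subseteq> carrier_vec n"
    and orth: "\<And>i j. i < n \<Longrightarrow> j < n \<Longrightarrow> us ! i \<bullet>c us ! j = (if i = j then 1 else 0)"
    and us0: "us ! 0 = c \<cdot>\<^sub>v v"
    using orthonormal_basis_extending[OF v v0] by blast
  define W where "W = mat_of_cols n us"
  have W: "W \<in> carrier_mat n n" unfolding W_def using mat_of_cols_carrier(1)[of n us] len by simp
  have "mat_adjoint W * W = 1\<^sub>m n"
  proof (rule eq_matI)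
    fix i j assume "i < dim_row (1\<^sub>m n)" "j < dim_col (1\<^sub>m n)"
    then have i: "i < n" and j: "j < n" by auto
    have "(mat_adjoint W * W) $$ (i,j) = (\<Sum>k<n. us ! j $ k * cnj (us ! i $ k))"
      using index_mult_mat_sum[OF mat_adjoint_carrier[OF W] W i j] i j len
      by (simp add: W_def mat_of_cols_index mult.commute)
    also have "\<dots> = us ! j \<bullet>c us ! i"
      unfolding cscalar_prod_sum using us len i by (auto dest!: nth_mem)
    finally show "(mat_adjoint W * W) $$ (i,j) = 1\<^sub>m n $$ (i,j)" using orth[OF j i] i j by auto
  qed (use W in auto)
  moreover have "col W 0 = c \<cdot>\<^sub>v v"
    using v v0 len us0 by (cases n) (auto simp: W_def)
  ultimately show ?thesis using that W unfolding unitary_mat_def by blast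
qed

lemma unitary_conj_eigenvector_col:
  assumes A: "A \<in> carrier_mat n n" and W: "unitary_mat n W" and n: "0 < n"
    and ev: "A *\<^sub>v col W 0 = e \<cdot>\<^sub>v col W 0"
  shows "col (mat_adjoint W * A * W) 0 = e \<cdot>\<^sub>v unit_vec n 0"
proof -
  have Wc: "W \<in> carrier_mat n n" and WW: "mat_adjoint W * W = 1\<^sub>m n"
    using W unfolding unitary_mat_def by auto
  have "col (mat_adjoint W * A * W) 0 = mat_adjoint W *\<^sub>v (A *\<^sub>v col W 0)"
    using A Wc n by (subst col_mult2[of _ n n]) (auto intro: assoc_mult_mat_vec)
  also have "\<dots> = e \<cdot>\<^sub>v col (mat_adjoint W * W) 0"
    unfolding ev using Wc n by (simp add: mult_mat_vec[of _ n n] col_mult2[OF mat_adjoint_carrier[OF Wc] Wc n])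
  finally show ?thesis using WW n by simp
qed

lemma mat_adjoint_mult_conj:
  assumes W: "W \<in> carrier_mat n n" and V: "V \<in> carrier_mat n n" and A: "A \<in> carrier_mat n n"
  shows "mat_adjoint (W * V) * A * (W * V) = mat_adjoint V * (mat_adjoint W * A * W) * (V::complex mat)"
proof -
  have aW: "mat_adjoint W \<in> carrier_mat n n" and aV: "mat_adjoint V \<in> carrier_mat n n"
    using W V by auto
  have "mat_adjoint V * mat_adjoint W * A * (W * V) = mat_adjoint V * (mat_adjoint W * A) * (W * V)"
    using assoc_mult_mat[OF aV aW A] by simp
  also have "\<dots> = mat_adjoint V * (mat_adjoint W * A * W * V)"
    using assoc_mult_mat[OF aV mult_carrier_mat[OF aW A] mult_carrier_mat[OF W V]]
      assoc_mult_mat[OF mult_carrier_mat[OF aW A] W V] by simp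
  also have "\<dots> = mat_adjoint V * (mat_adjoint W * A * W) * V"
    using assoc_mult_mat[OF aV mult_carrier_mat[OF mult_carrier_mat[OF aW A] W] V] by simp
  finally show ?thesis unfolding mat_adjoint_mult[OF W V] .
qed

lemma block_diag_conj:
  assumes "P \<in> carrier_mat k k" "B \<in> carrier_mat k k" "U \<in> carrier_mat n n" "A \<in> carrier_mat n n"
  shows "mat_adjoint (block_diag P U) * block_diag B A * block_diag P U =
    block_diag (mat_adjoint P * B * P) (mat_adjoint U * A * U)"
proof -
  have "mat_adjoint (block_diag P U) * block_diag B A = block_diag (mat_adjoint P * B) (mat_adjoint U * A)"
    unfolding mat_adjoint_block_diag by (rule block_diag_mult) (use assms in auto)
  also have "\<dots> * block_diag P U = block_diag (mat_adjoint P * B * P) (mat_adjoint U * A * U)"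
    by (rule block_diag_mult) (use assms in auto)
  finally show ?thesis .
qed

lemma hermitian_first_col_block_diag:
  fixes A :: "complex mat"
  assumes A: "A \<in> carrier_mat (Suc n) (Suc n)" and herm: "mat_adjoint A = A"
    and col0: "col A 0 = e \<cdot>\<^sub>v unit_vec (Suc n) 0"
  defines "A' \<equiv> mat n n (\<lambda>(i,j). A $$ (Suc i, Suc j))"
  shows "A = block_diag (mat 1 1 (\<lambda>_. e)) A'" "mat_adjoint A' = A'"
proof -
  have A0: "A $$ (i,0) = (if i = 0 then e else 0)" if "i < Suc n" for i
    using arg_cong[OF col0, of "\<lambda>w. w $ i"] that A by auto
  have A0': "A $$ (0,j) = cnj (A $$ (j,0))" if "j < Suc n" for j
    using arg_cong[OF herm, of "\<lambda>B. B $$ (0,j)"] that A by simp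
  have "cnj e = e" using A0'[of 0] A0[of 0] by simp
  then show "A = block_diag (mat 1 1 (\<lambda>_. e)) A'"
    using A A0 A0' by (intro eq_matI) (auto simp: block_diag_def A'_def)
  show "mat_adjoint A' = A'"
  proof (rule eq_matI)
    fix i j assume "i < dim_row A'" "j < dim_col A'"
    then show "mat_adjoint A' $$ (i,j) = A' $$ (i,j)"
      using arg_cong[OF herm, of "\<lambda>B. B $$ (Suc i, Suc j)"] A by (simp add: A'_def)
  qed (simp_all add: A'_def)
qed

lemma eigenvector_exists:
  fixes A :: "complex mat"
  assumes A: "A \<in> carrier_mat (Suc n) (Suc n)"
  obtains v e where "eigenvector A v e"
proof -
  obtain as where "char_poly A = (\<Prod>a\<leftarrow>as. [:- a, 1:])" "length as = Suc n"
    using char_poly_factorized[OF A] by auto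
  then obtain e where "poly (char_poly A) e = 0" by (cases as) (auto simp: poly_prod_list)
  then have "eigenvalue A e" using eigenvalue_root_char_poly[OF A] by simp
  then show ?thesis using find_eigenvector[OF A] that by blast
qed

theorem hermitian_unitarily_diagonalizable:
  fixes A :: "complex mat"
  assumes "A \<in> carrier_mat n n" "mat_adjoint A = A"
  shows "\<exists>U. unitary_mat n U \<and> diagonal_mat (mat_adjoint U * A * U)"
  using assms
proof (induction n arbitrary: A)
  case 0
  then show ?case by (intro exI[of _ "1\<^sub>m 0"]) (auto simp: unitary_mat_def diagonal_mat_def)
next
  case (Suc n)
  have A: "A \<in> carrier_mat (Suc n) (Suc n)" and herm: "mat_adjoint A = A" by fact+
  obtain v e where "eigenvector A v e" using eigenvector_exists[OF A] .
  then have v: "v \<in> carrier_vec (Suc n)" "v \<noteq> 0\<^sub>v (Suc n)" and Av: "A *\<^sub>v v = e \<cdot>\<^sub>v v"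
    using A unfolding eigenvector_def by auto
  obtain W c where W: "unitary_mat (Suc n) W" and W0: "col W 0 = c \<cdot>\<^sub>v v"
    using unitary_mat_with_first_col[OF v] by blast
  have Wc: "W \<in> carrier_mat (Suc n) (Suc n)" using W unfolding unitary_mat_def by simp
  \<comment> \<open>Deflation: conjugating by \<open>W\<close> splits off the eigenvalue as a \<open>1 \<times> 1\<close> block.\<close>
  define A' where "A' = mat_adjoint W * A * W"
  define A3 where "A3 = mat n n (\<lambda>(i,j). A' $$ (Suc i, Suc j))"
  have "A *\<^sub>v col W 0 = e \<cdot>\<^sub>v col W 0"
    unfolding W0 using A v Av by (simp add: mult_mat_vec[OF A] smult_smult_assoc mult.commute)
  then have "col A' 0 = e \<cdot>\<^sub>v unit_vec (Suc n) 0"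
    unfolding A'_def using unitary_conj_eigenvector_col[OF A W] by simp
  moreover have "A' \<in> carrier_mat (Suc n) (Suc n)" unfolding A'_def using A Wc by auto
  moreover have "mat_adjoint A' = A'" unfolding A'_def by (rule mat_adjoint_conj[OF Wc A herm])
  ultimately have blocks: "A' = block_diag (mat 1 1 (\<lambda>_. e)) A3" "mat_adjoint A3 = A3"
    using hermitian_first_col_block_diag[of A' n e] unfolding A3_def by blast+
  have A3c: "A3 \<in> carrier_mat n n" unfolding A3_def by simp
  obtain U3 where U3: "unitary_mat n U3" and D3: "diagonal_mat (mat_adjoint U3 * A3 * U3)"
    using Suc.IH[OF A3c blocks(2)] by blast
  have U3c: "U3 \<in> carrier_mat n n" using U3 unfolding unitary_mat_def by simp
  define V where "V = block_diag (1\<^sub>m 1) U3"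
  have Vc: "V \<in> carrier_mat (Suc n) (Suc n)"
    using block_diag_carrier[OF one_carrier_mat[of 1] U3c] unfolding V_def by simp
  let ?D = "block_diag (mat_adjoint (1\<^sub>m 1) * mat 1 1 (\<lambda>_. e) * 1\<^sub>m 1) (mat_adjoint U3 * A3 * U3)"
  have "mat_adjoint (W * V) * A * (W * V) = mat_adjoint V * A' * V"
    unfolding A'_def by (rule mat_adjoint_mult_conj[OF Wc Vc A])
  also have "\<dots> = ?D"
    unfolding V_def by (subst blocks(1), rule block_diag_conj) (use U3c A3c in auto)
  finally have "mat_adjoint (W * V) * A * (W * V) = ?D" .
  moreover have "diagonal_mat ?D"
    by (rule diagonal_mat_block_diag[of _ 1 _ n]) (use U3c A3c D3 in \<open>auto simp: diagonal_mat_def\<close>)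
  moreover have "unitary_mat (Suc n) (W * V)"
    using unitary_mat_mult[OF W] unitary_mat_block_diag[OF unitary_mat_one[of 1] U3] by (simp add: V_def)
  ultimately show ?case by auto
qed

section \<open>Squared singular values and the Courant-Fischer count\<close>

lemma index_adjoint_mult_mat_vec:
  fixes U :: "complex mat"
  assumes U: "U \<in> carrier_mat n m" and v: "v \<in> carrier_vec n" and k: "k < m"
  shows "(mat_adjoint U *\<^sub>v v) $ k = v \<bullet>c col U k"
  unfolding index_mult_mat_vec_sum[OF mat_adjoint_carrier[OF U] v k] cscalar_prod_sum
  using U k by (auto simp: mult.commute intro: sum.cong)

lemma unitary_mat_parseval:
  assumes U: "unitary_mat n U" and v: "v \<in> carrier_vec n"
  shows "(\<Sum>i<n. (cmod (v $ i))^2) = (\<Sum>k<n. (cmod (v \<bullet>c col U k))^2)"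
proof -
  have Uc: "U \<in> carrier_mat n n" and UU: "mat_adjoint U * U = 1\<^sub>m n"
    using U unfolding unitary_mat_def by auto
  define a where "a = mat_adjoint U *\<^sub>v v"
  have a: "a \<in> carrier_vec n" unfolding a_def using mult_mat_vec_carrier[OF mat_adjoint_carrier[OF Uc] v] .
  have "v = U *\<^sub>v a"
    unfolding a_def using Uc v unitary_mat_mult_adjoint[OF U]
    by (simp flip: assoc_mult_mat_vec[of _ n n _ n])
  have Ua: "U *\<^sub>v a \<in> carrier_vec n" using Uc a by simp
  have "mat_adjoint U *\<^sub>v (U *\<^sub>v a) = a"
    using Uc UU a by (simp flip: assoc_mult_mat_vec[OF mat_adjoint_carrier[OF Uc] Uc a])
  then have "v \<bullet>c v = a \<bullet>c a"
    using mult_mat_vec_cscalar_prod[OF Uc Ua a] \<open>v = U *\<^sub>v a\<close> by simp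
  then have "complex_of_real (\<Sum>i<n. (cmod (v $ i))^2) = of_real (\<Sum>k<n. (cmod (a $ k))^2)"
    using v a by (simp add: cscalar_prod_self)
  then show ?thesis
    unfolding of_real_eq_iff a_def using index_adjoint_mult_mat_vec[OF Uc v] by simp
qed

lemma proots_prod_linear: "proots (\<Prod>a\<leftarrow>as. [:- a, 1::complex:]) = mset as"
proof (induction as)
  case (Cons a as)
  have "(\<Prod>a\<leftarrow>as. [:- a, 1::complex:]) \<noteq> 0" by (subst prod_list_zero_iff) auto
  then have "proots ([:- a, 1:] * (\<Prod>a\<leftarrow>as. [:- a, 1::complex:])) =
      proots [:- a, 1:] + proots (\<Prod>a\<leftarrow>as. [:- a, 1::complex:])"
    by (intro proots_mult) auto
  then show ?case using Cons by simp
qed simp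

lemma unitary_conj_cancel:
  assumes U: "unitary_mat n U" and H: "H \<in> carrier_mat n n"
  shows "U * (mat_adjoint U * H * U) * mat_adjoint U = H"
proof -
  have Uc: "U \<in> carrier_mat n n" using U unfolding unitary_mat_def by simp
  have "U * (mat_adjoint U * H * U) * mat_adjoint U = (U * mat_adjoint U) * H * (U * mat_adjoint U)"
    using Uc H by (simp add: assoc_mult_mat[of _ n n _ n _ n] mult_carrier_mat[of _ n n _ n])
  then show ?thesis using H unfolding unitary_mat_mult_adjoint[OF U] by simp
qed

lemma sq_singvals_unitary_diag:
  fixes M :: "complex mat"
  assumes M: "M \<in> carrier_mat n p" and U: "unitary_mat n U"
    and D: "diagonal_mat (mat_adjoint U * (M * mat_adjoint M) * U)"
  shows "sq_singvals M = mset (diag_mat (mat_adjoint U * (M * mat_adjoint M) * U))"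
proof -
  define H where "H = M * mat_adjoint M"
  define D where "D = mat_adjoint U * H * U"
  have Uc: "U \<in> carrier_mat n n" using U unfolding unitary_mat_def by simp
  have H: "H \<in> carrier_mat n n" and Dc: "D \<in> carrier_mat n n"
    unfolding H_def D_def using M Uc by auto
  have "similar_mat_wit H D U (mat_adjoint U)"
  proof (rule similar_mat_witI[OF unitary_mat_mult_adjoint[OF U]])
    show "mat_adjoint U * U = 1\<^sub>m n" using U unfolding unitary_mat_def by simp
    show "H = U * D * mat_adjoint U" unfolding D_def using unitary_conj_cancel[OF U H] by simp
  qed (use H Dc Uc in auto)
  then have "char_poly H = char_poly D"
    by (intro char_poly_similar) (auto simp: similar_mat_def)
  also have "\<dots> = (\<Prod>a\<leftarrow>diag_mat D. [:- a, 1:])"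
    using Dc D unfolding D_def H_def
    by (intro char_poly_upper_triangular) (auto simp: upper_triangular_def diagonal_mat_def)
  finally show ?thesis
    unfolding sq_singvals_def H_def[symmetric] D_def[symmetric] by (simp add: proots_prod_linear)
qed

lemma cscalar_prod_hermitian_diagonal:
  fixes D :: "complex mat"
  assumes D: "D \<in> carrier_mat n n" "diagonal_mat D" "mat_adjoint D = D" and a: "a \<in> carrier_vec n"
  shows "a \<bullet>c (D *\<^sub>v a) = of_real (\<Sum>k<n. Re (D $$ (k,k)) * (cmod (a $ k))^2)"
proof -
  have "(D *\<^sub>v a) $ k = D $$ (k,k) * a $ k" if k: "k < n" for k
  proof -
    have "(D *\<^sub>v a) $ k = (\<Sum>l<n. if l = k then D $$ (k,k) * a $ k else 0)"
      unfolding index_mult_mat_vec_sum[OF D(1) a k] using D k by (intro sum.cong) (auto simp: diagonal_mat_def)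
    then show ?thesis using k by simp
  qed
  then have "a \<bullet>c (D *\<^sub>v a) = (\<Sum>k<n. a $ k * cnj (D $$ (k,k) * a $ k))"
    unfolding cscalar_prod_sum using D a by simp
  also have "\<dots> = (\<Sum>k<n. of_real (Re (D $$ (k,k))) * (a $ k * cnj (a $ k)))"
  proof (rule sum.cong[OF refl])
    fix k assume "k \<in> {..<n}"
    then obtain r where r: "D $$ (k,k) = of_real r" using hermitian_diag_real[OF D(3,1)] by blast
    show "a $ k * cnj (D $$ (k,k) * a $ k) = of_real (Re (D $$ (k,k))) * (a $ k * cnj (a $ k))"
      unfolding r by simp
  qed
  finally show ?thesis unfolding of_real_sum by (simp only: of_real_mult complex_norm_square)
qed

lemma adjoint_sqnorm_unitary_diag:
  fixes M :: "complex mat"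
  assumes M: "M \<in> carrier_mat n p" and U: "unitary_mat n U"
    and D: "diagonal_mat (mat_adjoint U * (M * mat_adjoint M) * U)" and v: "v \<in> carrier_vec n"
  shows "(\<Sum>k<p. (cmod ((mat_adjoint M *\<^sub>v v) $ k))^2) =
    (\<Sum>k<n. Re ((mat_adjoint U * (M * mat_adjoint M) * U) $$ (k,k)) * (cmod (v \<bullet>c col U k))^2)"
proof -
  define H where "H = M * mat_adjoint M"
  define D where "D = mat_adjoint U * H * U"
  define a where "a = mat_adjoint U *\<^sub>v v"
  have Uc: "U \<in> carrier_mat n n" using U unfolding unitary_mat_def by simp
  have H: "H \<in> carrier_mat n n" and Dc: "D \<in> carrier_mat n n"
    unfolding H_def D_def using M Uc by auto
  have aM: "mat_adjoint M \<in> carrier_mat p n" and aU: "mat_adjoint U \<in> carrier_mat n n"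
    using M Uc by auto
  have w: "mat_adjoint M *\<^sub>v v \<in> carrier_vec p" using aM v by simp
  have a: "a \<in> carrier_vec n" unfolding a_def using aU v by simp
  have Da: "D *\<^sub>v a \<in> carrier_vec n" using Dc a by simp
  have hD: "mat_adjoint D = D"
    unfolding D_def H_def by (rule mat_adjoint_conj[OF Uc _ mat_adjoint_mult_self[OF M]]) (use M in simp)
  have "U *\<^sub>v (D *\<^sub>v a) = (U * D * mat_adjoint U) *\<^sub>v v"
    unfolding a_def using assoc_mult_mat_vec[OF mult_carrier_mat[OF Uc Dc] aU v]
      assoc_mult_mat_vec[OF Uc Dc a[unfolded a_def]] by simp
  also have "\<dots> = M *\<^sub>v (mat_adjoint M *\<^sub>v v)"
    using unitary_conj_cancel[OF U H] assoc_mult_mat_vec[OF M aM v] by (simp add: D_def H_def)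
  finally have "M *\<^sub>v (mat_adjoint M *\<^sub>v v) = U *\<^sub>v (D *\<^sub>v a)" ..
  then have "(mat_adjoint M *\<^sub>v v) \<bullet>c (mat_adjoint M *\<^sub>v v) = a \<bullet>c (D *\<^sub>v a)"
    using mult_mat_vec_cscalar_prod[OF aM w v] mult_mat_vec_cscalar_prod[OF aU Da v]
    by (simp add: a_def)
  also have "\<dots> = of_real (\<Sum>k<n. Re (D $$ (k,k)) * (cmod (a $ k))^2)"
    using cscalar_prod_hermitian_diagonal[OF Dc _ hD a] D unfolding D_def H_def by simp
  finally show ?thesis
    unfolding D_def H_def cscalar_prod_self a_def using w index_adjoint_mult_mat_vec[OF Uc v]
    by (simp only: of_real_eq_iff carrier_vecD) simp
qed

lemma sq_singvals_spectral:
  fixes M :: "complex mat"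
  assumes M: "M \<in> carrier_mat n p"
  obtains U d where "unitary_mat n U"
    "sq_singvals M = mset (map (\<lambda>k. complex_of_real (d k)) [0..<n])"
    "\<And>v. v \<in> carrier_vec n \<Longrightarrow>
       (\<Sum>k<p. (cmod ((mat_adjoint M *\<^sub>v v) $ k))^2) = (\<Sum>k<n. d k * (cmod (v \<bullet>c col U k))^2)"
proof -
  define H where "H = M * mat_adjoint M"
  have H: "H \<in> carrier_mat n n" and hH: "mat_adjoint H = H"
    unfolding H_def using M mat_adjoint_mult_self[OF M] by auto
  obtain U where U: "unitary_mat n U" and D: "diagonal_mat (mat_adjoint U * H * U)"
    using hermitian_unitarily_diagonalizable[OF H hH] by blast
  define D where "D = mat_adjoint U * H * U"
  have Uc: "U \<in> carrier_mat n n" using U unfolding unitary_mat_def by simp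
  have Dc: "D \<in> carrier_mat n n" unfolding D_def using H Uc by auto
  have "diag_mat D = map (\<lambda>k. complex_of_real (Re (D $$ (k,k)))) [0..<n]"
    unfolding diag_mat_def using Dc hermitian_diag_real[OF mat_adjoint_conj[OF Uc H hH, folded D_def] Dc]
    by (intro nth_equalityI) auto
  then show ?thesis
    using that[OF U] sq_singvals_unitary_diag[OF M U] adjoint_sqnorm_unitary_diag[OF M U] D
    unfolding D_def H_def by simp
qed

lemma (in vec_space) rank_spanning_indpt_cols:
  assumes A: "A \<in> carrier_mat n nc"
  obtains S where "S \<subseteq> set (cols A)" "lin_indpt S" "rank A = card S" "set (cols A) \<subseteq> span S"
proof -
  obtain S where max: "maximal S (\<lambda>T. T \<subseteq> set (cols A) \<and> lin_indpt T)"
    using maximal_exists[of "\<lambda>T. T \<subseteq> set (cols A) \<and> lin_indpt T" "card (set (cols A))" "{}"]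
    by (meson List.finite_set card_mono empty_iff empty_subsetI finite_lin_indpt2 rev_finite_subset)
  have SA: "S \<subseteq> set (cols A)" and li: "lin_indpt S" using max unfolding maximal_def by auto
  have Sc: "S \<subseteq> carrier_vec n" using SA A by (auto simp: cols_def)
  have "c \<in> span S" if cA: "c \<in> set (cols A)" for c
  proof (cases "c \<in> S")
    case True
    then show ?thesis using span_mem[OF Sc] by blast
  next
    case False
    have "\<not> lin_indpt (insert c S)"
      using max cA SA False unfolding maximal_def by (metis insert_subset subset_insertI)
    then show ?thesis using lin_dep_iff_in_span[OF Sc li _ False] cA A by (auto simp: cols_def)
  qed
  then show ?thesis using that[OF SA li rank_card_indpt[OF A max]] by blast
qed

lemma mrank_orthogonal_kernel:
  fixes D :: "complex mat"
  assumes D: "D \<in> carrier_mat n p"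
  obtains bs where "set bs \<subseteq> carrier_vec n" "length bs \<le> mrank D"
    "\<And>v. v \<in> carrier_vec n \<Longrightarrow> (\<forall>b\<in>set bs. v \<bullet>c b = 0) \<Longrightarrow> mat_adjoint D *\<^sub>v v = 0\<^sub>v p"
proof -
  interpret vec_space "TYPE(complex)" n .
  obtain S where SD: "S \<subseteq> set (cols D)" and "lin_indpt S" and rk: "rank D = card S"
    and span: "set (cols D) \<subseteq> span S"
    using rank_spanning_indpt_cols[OF D] by blast
  have finS: "finite S" and Sc: "S \<subseteq> carrier_vec n"
    using SD D finite_subset by (auto simp: cols_def)
  obtain bs where bs: "set bs = S" and "distinct bs" using finite_distinct_list[OF finS] by blast
  then have "length bs \<le> mrank D" using rk D by (auto simp: mrank_def dest: distinct_card)
  moreover have "mat_adjoint D *\<^sub>v v = 0\<^sub>v p"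
    if v: "v \<in> carrier_vec n" and orth: "\<forall>b\<in>set bs. v \<bullet>c b = 0" for v
  proof -
    have "v \<bullet>c c = 0" if c: "c \<in> span S" for c
    proof -
      obtain a where "lincomb a S = c" using c finite_in_span[OF finS Sc] by auto
      then have ci: "c $ i = (\<Sum>x\<in>S. a x * x $ i)" if "i < n" for i
        using lincomb_index[OF that Sc] by blast
      have "c \<in> carrier_vec n" using c Sc span_closed by auto
      then have "v \<bullet>c c = (\<Sum>i<n. v $ i * cnj (\<Sum>x\<in>S. a x * x $ i))"
        unfolding cscalar_prod_sum using ci by (intro sum.cong) auto
      also have "\<dots> = (\<Sum>x\<in>S. cnj (a x) * (v \<bullet>c x))"
        unfolding cscalar_prod_sum using Sc
        by (simp add: sum_distrib_left sum_distrib_right ac_simps sum.swap[of _ S])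
          (intro sum.cong, auto)
      finally show ?thesis using orth bs by simp
    qed
    then have "(mat_adjoint D *\<^sub>v v) $ k = 0" if "k < p" for k
      using span D that unfolding index_adjoint_mult_mat_vec[OF D v that] by (auto simp: cols_def image_subset_iff)
    then show ?thesis using D by (intro eq_vecI) auto
  qed
  ultimately show ?thesis using that bs Sc by blast
qed

lemma mrank_le_card_nonzero_entries:
  fixes D :: "complex mat"
  assumes D: "D \<in> carrier_mat a b"
  shows "mrank D \<le> card {(j,k). j < a \<and> k < b \<and> D $$ (j,k) \<noteq> 0}"
proof -
  interpret vec_space "TYPE(complex)" a .
  define P where "P = {(j,k). j < a \<and> k < b \<and> D $$ (j,k) \<noteq> 0}"
  define K where "K = {k. k < b \<and> col D k \<noteq> 0\<^sub>v a}"
  obtain S where SD: "S \<subseteq> set (cols D)" and li: "lin_indpt S" and rk: "rank D = card S"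
    by (rule rank_spanning_indpt_cols[OF D])
  have finP: "finite P" unfolding P_def by (rule finite_subset[of _ "{..<a} \<times> {..<b}"]) auto
  have z: "0\<^sub>v a \<notin> S"
  proof
    assume "0\<^sub>v a \<in> S"
    then have "lin_dep S" by (intro zero_lin_dep) (auto simp: class_ring_simps)
    then show False using li by simp
  qed
  have "S \<subseteq> col D ` K"
  proof
    fix x assume x: "x \<in> S"
    then obtain k where "k < b" "x = col D k" using SD D by (auto simp: cols_def)
    then show "x \<in> col D ` K" using z x unfolding K_def by auto
  qed
  then have "card S \<le> card (col D ` K)" by (rule card_mono[rotated]) (simp add: K_def)
  also have "\<dots> \<le> card K" by (rule card_image_le) (simp add: K_def)
  also have "K \<subseteq> snd ` P"
  proof
    fix k assume "k \<in> K"
    then have k: "k < b" and nz: "col D k \<noteq> 0\<^sub>v a" unfolding K_def by auto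
    obtain j where "j < a" "col D k $ j \<noteq> 0"
      using nz D k by (metis carrier_matD(1) col_dim dim_col eq_vecI index_zero_vec(1) index_zero_vec(2))
    then have "(j,k) \<in> P" using D k unfolding P_def by simp
    then show "k \<in> snd ` P" by force
  qed
  then have "card K \<le> card (snd ` P)" by (rule card_mono[rotated]) (simp add: finP)
  also have "\<dots> \<le> card P" by (rule card_image_le[OF finP])
  finally show ?thesis unfolding mrank_def P_def using rk D by simp
qed

lemma exists_nonzero_orthogonal_vec:
  fixes cs :: "complex vec list"
  assumes len: "length cs < n" and cs: "set cs \<subseteq> carrier_vec n"
  obtains v where "v \<in> carrier_vec n" "v \<noteq> 0\<^sub>v n" "\<And>c. c \<in> set cs \<Longrightarrow> v \<bullet>c c = 0"
proof -
  define k where "k = length cs"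
  define c where "c i = (if i < k then conjugate (cs ! i) else 0\<^sub>v n)" for i
  have cc: "c \<in> {0..<n} \<rightarrow> carrier_vec n"
    using cs unfolding c_def k_def by (auto intro!: carrier_vec_conjugate nth_mem[THEN subsetD[OF cs]])
  define A where "A = mat\<^sub>r n n (\<lambda>i. if i = k then 0\<^sub>v n else c i)"
  have A: "A \<in> carrier_mat n n" unfolding A_def by simp
  \<comment> \<open>Padding the conjugated vectors with a zero row makes the matrix singular.\<close>
  have "det A = 0" unfolding A_def by (rule det_row_0[OF _ cc]) (use len in \<open>simp add: k_def\<close>)
  then obtain v where v: "v \<in> carrier_vec n" and v0: "v \<noteq> 0\<^sub>v n" and Av: "A *\<^sub>v v = 0\<^sub>v n"
    using det_0_iff_vec_prod_zero[OF A] by blast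
  have "v \<bullet>c b = 0" if bcs: "b \<in> set cs" for b
  proof -
    obtain i where i: "i < k" and bi: "b = cs ! i" using bcs unfolding k_def by (auto simp: in_set_conv_nth)
    have b: "b \<in> carrier_vec n" using cs bcs by auto
    have "0 = row A i \<bullet> v" using Av A i len k_def by (metis index_mult_mat_vec index_zero_vec(1) carrier_matD(1) order.strict_trans)
    also have "row A i = conjugate b"
      unfolding A_def c_def using i bi b len k_def by (simp add: row_mat_of_row_fun)
    finally show ?thesis using b v by (simp add: comm_scalar_prod[of _ n])
  qed
  then show ?thesis using that v v0 by blast
qed

lemma sum_weighted_le_of_vanishing_above:
  fixes d c :: "'a \<Rightarrow> real"
  assumes "\<And>k. k \<in> I \<Longrightarrow> 0 \<le> c k" "\<And>k. k \<in> I \<Longrightarrow> x < d k \<Longrightarrow> c k = 0"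
  shows "(\<Sum>k\<in>I. d k * c k) \<le> x * (\<Sum>k\<in>I. c k)"
  unfolding sum_distrib_left
proof (rule sum_mono)
  fix k assume k: "k \<in> I"
  show "d k * c k \<le> x * c k"
    using assms[OF k] by (cases "x < d k") (auto intro: mult_right_mono)
qed

lemma sum_weighted_gt_of_vanishing_below:
  fixes d c :: "'a \<Rightarrow> real"
  assumes I: "finite I" and c: "\<And>k. k \<in> I \<Longrightarrow> 0 \<le> c k"
    and vanish: "\<And>k. k \<in> I \<Longrightarrow> d k \<le> x \<Longrightarrow> c k = 0" and pos: "0 < (\<Sum>k\<in>I. c k)"
  shows "x * (\<Sum>k\<in>I. c k) < (\<Sum>k\<in>I. d k * c k)"
proof -
  have "\<exists>k\<in>I. 0 < c k"
  proof (rule ccontr)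
    assume "\<not> (\<exists>k\<in>I. 0 < c k)"
    then have "(\<Sum>k\<in>I. c k) \<le> 0" by (intro sum_nonpos) (auto simp: not_less)
    then show False using pos by simp
  qed
  then obtain k where k: "k \<in> I" "0 < c k" by blast
  have "0 \<le> (d i - x) * c i" if "i \<in> I" for i
    using c[OF that] vanish[OF that] by (cases "d i \<le> x") auto
  moreover have "0 < (d k - x) * c k"
    using k vanish[OF k(1)] by (cases "d k \<le> x") auto
  ultimately have "0 < (\<Sum>k\<in>I. (d k - x) * c k)"
    by (rule sum_pos2[OF I k(1), rotated])
  then show ?thesis by (simp add: sum_distrib_left left_diff_distrib sum_subtractf)
qed

lemma sum_cmod_sq_pos:
  fixes v :: "complex vec"
  assumes "v \<in> carrier_vec n" "v \<noteq> 0\<^sub>v n"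
  shows "0 < (\<Sum>i<n. (cmod (v $ i))^2)"
proof -
  obtain i where "i < n" "v $ i \<noteq> 0" using assms by (metis carrier_vecD eq_vecI index_zero_vec)
  then show ?thesis by (intro sum_pos2[of _ i]) auto
qed

definition sq_singval_count :: "complex mat \<Rightarrow> real \<Rightarrow> nat" where
  "sq_singval_count M x = size (filter_mset (\<lambda>l. Re l \<le> x) (sq_singvals M))"

lemma size_filter_mset_map_upt:
  "size (filter_mset P (mset (map f [0..<n]))) = card {k. k < n \<and> P (f k)}"
proof -
  have "size (filter_mset P (mset (map f [0..<n]))) = length (filter P (map f [0..<n]))"
    by (simp only: mset_filter[symmetric] size_mset)
  also have "\<dots> = card {k. k < n \<and> P (f k)}"
    by (subst length_filter_conv_card) (auto intro: arg_cong[where f = card])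
  finally show ?thesis .
qed

lemma sq_singval_count_le_of_agree:
  fixes M1 M2 :: "complex mat" and bs :: "complex vec list"
  assumes M1: "M1 \<in> carrier_mat n p" and M2: "M2 \<in> carrier_mat n p" and bs: "set bs \<subseteq> carrier_vec n"
    and agree: "\<And>v. v \<in> carrier_vec n \<Longrightarrow> (\<forall>b\<in>set bs. v \<bullet>c b = 0) \<Longrightarrow>
                  mat_adjoint M1 *\<^sub>v v = mat_adjoint M2 *\<^sub>v v"
  shows "sq_singval_count M1 x \<le> sq_singval_count M2 x + length bs"
proof (rule ccontr)
  obtain U1 d1 where U1: "unitary_mat n U1"
    and sv1: "sq_singvals M1 = mset (map (\<lambda>k. complex_of_real (d1 k)) [0..<n])"
    and Q1: "\<And>v. v \<in> carrier_vec n \<Longrightarrow> (\<Sum>k<p. (cmod ((mat_adjoint M1 *\<^sub>v v) $ k))^2) =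
               (\<Sum>k<n. d1 k * (cmod (v \<bullet>c col U1 k))^2)"
    by (rule sq_singvals_spectral[OF M1]) blast
  obtain U2 d2 where U2: "unitary_mat n U2"
    and sv2: "sq_singvals M2 = mset (map (\<lambda>k. complex_of_real (d2 k)) [0..<n])"
    and Q2: "\<And>v. v \<in> carrier_vec n \<Longrightarrow> (\<Sum>k<p. (cmod ((mat_adjoint M2 *\<^sub>v v) $ k))^2) =
               (\<Sum>k<n. d2 k * (cmod (v \<bullet>c col U2 k))^2)"
    by (rule sq_singvals_spectral[OF M2]) blast
  define S1 where "S1 = {k. k < n \<and> x < d1 k}"
  define T2 where "T2 = {k. k < n \<and> d2 k \<le> x}"
  have "sq_singval_count M1 x + card S1 = n"
  proof -
    have "{k. k < n \<and> d1 k \<le> x} \<union> S1 = {..<n}" "{k. k < n \<and> d1 k \<le> x} \<inter> S1 = {}"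
      unfolding S1_def by auto
    then show ?thesis
      unfolding sq_singval_count_def sv1 size_filter_mset_map_upt
      using card_Un_disjoint[of "{k. k < n \<and> d1 k \<le> x}" S1] by (simp add: S1_def)
  qed
  moreover have "sq_singval_count M2 x = card T2"
    unfolding sq_singval_count_def sv2 size_filter_mset_map_upt T2_def by simp
  moreover assume "\<not> sq_singval_count M1 x \<le> sq_singval_count M2 x + length bs"
  \<comment> \<open>Otherwise some nonzero \<open>v\<close> is orthogonal to \<open>bs\<close>, to the eigenvectors of \<open>M1 M1\<^sup>*\<close> above \<open>x\<close>
    and to those of \<open>M2 M2\<^sup>*\<close> below \<open>x\<close>; then \<open>|M1\<^sup>* v|\<^sup>2 \<le> x |v|\<^sup>2 < |M2\<^sup>* v|\<^sup>2\<close>, although \<open>M1\<^sup>* v = M2\<^sup>* v\<close>.\<close>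
  ultimately have "length (bs @ map (col U1) (sorted_list_of_set S1) @ map (col U2) (sorted_list_of_set T2)) < n"
    by (simp add: S1_def T2_def)
  moreover have "set (bs @ map (col U1) (sorted_list_of_set S1) @ map (col U2) (sorted_list_of_set T2))
      \<subseteq> carrier_vec n"
    using bs U1 U2 by (auto simp: S1_def T2_def unitary_mat_def)
  ultimately obtain v where v: "v \<in> carrier_vec n" "v \<noteq> 0\<^sub>v n"
    and orth: "\<And>c. c \<in> set (bs @ map (col U1) (sorted_list_of_set S1) @ map (col U2) (sorted_list_of_set T2))
                 \<Longrightarrow> v \<bullet>c c = 0"
    by (rule exists_nonzero_orthogonal_vec) blast
  define nv where "nv = (\<Sum>i<n. (cmod (v $ i))^2)"
  have "(\<Sum>k<n. d1 k * (cmod (v \<bullet>c col U1 k))^2) \<le> x * nv"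
    unfolding nv_def unitary_mat_parseval[OF U1 v(1)]
    by (rule sum_weighted_le_of_vanishing_above) (use orth in \<open>auto simp: S1_def\<close>)
  moreover have "x * nv < (\<Sum>k<n. d2 k * (cmod (v \<bullet>c col U2 k))^2)"
    unfolding nv_def unitary_mat_parseval[OF U2 v(1)]
    using sum_cmod_sq_pos[OF v] unitary_mat_parseval[OF U2 v(1)] orth
    by (intro sum_weighted_gt_of_vanishing_below) (auto simp: T2_def)
  moreover have "mat_adjoint M1 *\<^sub>v v = mat_adjoint M2 *\<^sub>v v"
    using agree[OF v(1)] orth by simp
  ultimately show False using Q1[OF v(1)] Q2[OF v(1)] by simp
qed

section \<open>Monotone test functions and the Stieltjes kernel\<close>

lemma sorted_nth_le_nth_shift:
  fixes xs ys :: "real list"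
  assumes sx: "sorted xs" and sy: "sorted ys" and lx: "length xs = n" and ly: "length ys = n"
    and cnt: "\<And>t. length (filter (\<lambda>y. y \<le> t) ys) \<le> length (filter (\<lambda>x. x \<le> t) xs) + r"
    and i: "i + r < n"
  shows "xs ! i \<le> ys ! (i + r)"
proof (rule ccontr)
  assume gt: "\<not> ?thesis"
  define t where "t = ys ! (i + r)"
  have "{0..i+r} \<subseteq> {j. j < n \<and> ys ! j \<le> t}"
    unfolding t_def using sy ly i by (auto intro: sorted_nth_mono)
  then have "i + r + 1 \<le> card {j. j < n \<and> ys ! j \<le> t}"
    using card_mono[of "{j. j < n \<and> ys ! j \<le> t}" "{0..i+r}"] by simp
  moreover have "{j. j < n \<and> xs ! j \<le> t} \<subseteq> {0..<i}"
    using sx lx gt by (auto simp: t_def not_less intro: order.trans[OF sorted_nth_mono])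
  then have "card {j. j < n \<and> xs ! j \<le> t} \<le> i"
    using card_mono[of "{0..<i}"] by fastforce
  ultimately show False
    using cnt[of t] lx ly by (simp add: length_filter_conv_card)
qed

lemma sum_lessThan_add: "(\<Sum>i<m + (r::nat). f i) = (\<Sum>i<m. f i) + (\<Sum>i<r. f (m + i))"
  by (induction r) (simp_all add: ac_simps)

lemma sum_mono_fun_sorted_diff_le:
  fixes xs ys :: "real list" and g :: "real \<Rightarrow> real"
  assumes sx: "sorted xs" and sy: "sorted ys" and lx: "length xs = n" and ly: "length ys = n"
    and cnt: "\<And>t. length (filter (\<lambda>y. y \<le> t) ys) \<le> length (filter (\<lambda>x. x \<le> t) xs) + r"
    and g: "mono g" and K: "\<And>x. \<bar>g x\<bar> \<le> K"
  shows "(\<Sum>i<n. g (xs ! i)) - (\<Sum>i<n. g (ys ! i)) \<le> 2 * real r * K"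
proof -
  have gK: "g x \<le> K" "- K \<le> g x" for x using K[of x] by linarith+
  show ?thesis
  proof (cases "r < n")
    case False
    have "(\<Sum>i<n. g (xs ! i)) - (\<Sum>i<n. g (ys ! i)) \<le> (\<Sum>i<n. K) - (\<Sum>i<n. - K)"
      using gK by (intro diff_mono sum_mono) auto
    also have "\<dots> \<le> 2 * real r * K"
      using False K[of 0] mult_right_mono[of "real n" "real r" K] by (simp add: mult.commute)
    finally show ?thesis .
  next
    case True
    \<comment> \<open>The i-th smallest x is at most the (i + r)-th smallest y; the r unmatched terms
      on each side are bounded by K.\<close>
    define m where "m = n - r"
    have n: "n = m + r" using True m_def by simp
    have "(\<Sum>i<m. g (xs ! i)) \<le> (\<Sum>i<m. g (ys ! (i + r)))"
      using sorted_nth_le_nth_shift[OF sx sy lx ly cnt] g n by (intro sum_mono) (simp add: monoD)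
    moreover have "(\<Sum>i<r. g (xs ! (m + i))) \<le> (\<Sum>i<r. K)" "(\<Sum>i<r. - K) \<le> (\<Sum>i<r. g (ys ! i))"
      using gK by (intro sum_mono; simp)+
    moreover have "(\<Sum>i<n. g (xs ! i)) = (\<Sum>i<m. g (xs ! i)) + (\<Sum>i<r. g (xs ! (m + i)))"
      unfolding n by (rule sum_lessThan_add)
    moreover have "(\<Sum>i<n. g (ys ! i)) = (\<Sum>i<r. g (ys ! i)) + (\<Sum>i<m. g (ys ! (i + r)))"
      unfolding n using sum_lessThan_add[of "\<lambda>i. g (ys ! i)" r m] by (simp add: add.commute)
    ultimately show ?thesis by simp
  qed
qed

lemma sum_monotone_fun_sorted_abs_diff_le:
  fixes xs ys :: "real list" and g :: "real \<Rightarrow> real"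
  assumes sx: "sorted xs" and sy: "sorted ys" and lx: "length xs = n" and ly: "length ys = n"
    and cnt1: "\<And>t. length (filter (\<lambda>y. y \<le> t) ys) \<le> length (filter (\<lambda>x. x \<le> t) xs) + r"
    and cnt2: "\<And>t. length (filter (\<lambda>y. y \<le> t) xs) \<le> length (filter (\<lambda>x. x \<le> t) ys) + r"
    and g: "mono g \<or> antimono g" and K: "\<And>x. \<bar>g x\<bar> \<le> K"
  shows "\<bar>(\<Sum>i<n. g (xs ! i)) - (\<Sum>i<n. g (ys ! i))\<bar> \<le> 2 * real r * K"
  using g
proof
  assume "mono g"
  then show ?thesis
    using sum_mono_fun_sorted_diff_le[OF sx sy lx ly cnt1 \<open>mono g\<close> K]
      sum_mono_fun_sorted_diff_le[OF sy sx ly lx cnt2 \<open>mono g\<close> K]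
    by linarith
next
  assume "antimono g"
  then have "mono (\<lambda>x. - g x)" by (auto simp: mono_def antimono_def)
  moreover have "\<And>x. \<bar>- g x\<bar> \<le> K" using K by simp
  ultimately show ?thesis
    using sum_mono_fun_sorted_diff_le[OF sx sy lx ly cnt1, of "\<lambda>x. - g x" K]
      sum_mono_fun_sorted_diff_le[OF sy sx ly lx cnt2, of "\<lambda>x. - g x" K]
    by (simp add: sum_negf)
qed

definition poisson_kernel :: "real \<Rightarrow> real \<Rightarrow> real" where
  "poisson_kernel v s = v / (s^2 + v^2)"

definition conj_poisson_kernel :: "real \<Rightarrow> real \<Rightarrow> real" where
  "conj_poisson_kernel v s = s / (s^2 + v^2)"

lemma inverse_real_minus_complex:
  "1 / (complex_of_real l - z) =
    Complex (conj_poisson_kernel (Im z) (l - Re z)) (poisson_kernel (Im z) (l - Re z))"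
  by (simp add: complex_eq_iff conj_poisson_kernel_def poisson_kernel_def Re_divide Im_divide power2_eq_square)

lemma abs_poisson_kernel_le: "v > 0 \<Longrightarrow> \<bar>poisson_kernel v s\<bar> \<le> 1 / v"
  unfolding poisson_kernel_def by (simp add: divide_simps power2_eq_square add_nonneg_pos)

lemma abs_conj_poisson_kernel_le:
  assumes v: "v > 0" shows "\<bar>conj_poisson_kernel v s\<bar> \<le> 1 / v"
proof -
  have "0 \<le> (\<bar>s\<bar> - v)^2" by simp
  then have "2 * (v * \<bar>s\<bar>) \<le> s^2 + v^2" by (simp add: power2_eq_square algebra_simps)
  moreover have "0 \<le> v * \<bar>s\<bar>" using v by simp
  ultimately have "v * \<bar>s\<bar> \<le> s^2 + v^2" by linarith
  then show ?thesis
    unfolding conj_poisson_kernel_def using v by (simp add: divide_simps abs_div mult.commute add_nonneg_pos)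
qed

lemma conj_poisson_kernel_le_iff_aux:
  assumes v: "v > 0"
  shows "conj_poisson_kernel v a \<le> conj_poisson_kernel v b \<longleftrightarrow> 0 \<le> (b - a) * (v^2 - a * b)"
proof -
  have "a^2 + v^2 > 0" "b^2 + v^2 > 0" using v by (auto intro: add_nonneg_pos)
  then show ?thesis
    unfolding conj_poisson_kernel_def by (simp add: divide_simps algebra_simps power2_eq_square)
qed

lemma mono_conj_poisson_kernel_middle:
  assumes v: "v > 0" shows "mono (\<lambda>s. conj_poisson_kernel v (max (min s v) (- v)))"
proof (rule monoI)
  fix x y :: real assume "x \<le> y"
  define a b where "a = max (min x v) (- v)" and "b = max (min y v) (- v)"
  have "\<bar>a\<bar> * \<bar>b\<bar> \<le> v * v" unfolding a_def b_def using v by (intro mult_mono) auto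
  then have "a * b \<le> v^2" by (simp add: power2_eq_square abs_mult[symmetric])
  moreover have "a \<le> b" unfolding a_def b_def using \<open>x \<le> y\<close> by auto
  ultimately show "conj_poisson_kernel v (max (min x v) (- v)) \<le> conj_poisson_kernel v (max (min y v) (- v))"
    unfolding conj_poisson_kernel_le_iff_aux[OF v] a_def[symmetric] b_def[symmetric] by simp
qed

lemma antimono_conj_poisson_kernel_low:
  assumes v: "v > 0" shows "antimono (\<lambda>s. conj_poisson_kernel v (min s (- v)))"
proof (rule antimonoI)
  fix x y :: real assume "x \<le> y"
  moreover have "v * v \<le> (- min y (- v)) * (- min x (- v))" using v by (intro mult_mono) auto
  ultimately show "conj_poisson_kernel v (min y (- v)) \<le> conj_poisson_kernel v (min x (- v))"
    unfolding conj_poisson_kernel_le_iff_aux[OF v]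
    by (intro mult_nonpos_nonpos) (auto simp: power2_eq_square)
qed

lemma antimono_conj_poisson_kernel_high:
  assumes v: "v > 0" shows "antimono (\<lambda>s. conj_poisson_kernel v (max s v))"
proof (rule antimonoI)
  fix x y :: real assume "x \<le> y"
  moreover have "v * v \<le> max y v * max x v" using v by (intro mult_mono) auto
  ultimately show "conj_poisson_kernel v (max y v) \<le> conj_poisson_kernel v (max x v)"
    unfolding conj_poisson_kernel_le_iff_aux[OF v]
    by (intro mult_nonpos_nonpos) (auto simp: power2_eq_square)
qed

lemma conj_poisson_kernel_split:
  "conj_poisson_kernel v s = conj_poisson_kernel v (min s (- v))
     + conj_poisson_kernel v (max (min s v) (- v)) + conj_poisson_kernel v (max s v)"
  if "v > 0"
proof -
  have "conj_poisson_kernel v (- v) = - conj_poisson_kernel v v"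
    unfolding conj_poisson_kernel_def by simp
  then show ?thesis using that by (cases "s \<le> - v"; cases "s \<le> v") (auto simp: min_def max_def)
qed

lemma poisson_kernel_le:
  assumes "v > 0" "b^2 \<le> a^2" shows "poisson_kernel v a \<le> poisson_kernel v b"
proof -
  have "a^2 + v^2 > 0" "b^2 + v^2 > 0" using assms(1) by (auto intro: add_nonneg_pos)
  then show ?thesis
    unfolding poisson_kernel_def using assms by (intro divide_left_mono) auto
qed

lemma mono_poisson_kernel_low: "v > 0 \<Longrightarrow> mono (\<lambda>s. poisson_kernel v (min s 0))"
  by (rule monoI, rule poisson_kernel_le) (auto intro!: power_mono_even simp: abs_if)

lemma antimono_poisson_kernel_high: "v > 0 \<Longrightarrow> antimono (\<lambda>s. poisson_kernel v (max s 0))"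
  by (rule antimonoI, rule poisson_kernel_le) (auto intro!: power_mono)

lemma poisson_kernel_split:
  "v > 0 \<Longrightarrow> poisson_kernel v s = poisson_kernel v (min s 0) + poisson_kernel v (max s 0) - 1 / v"
  by (cases "s \<le> 0") (auto simp: min_def max_def poisson_kernel_def power2_eq_square)

lemma mono_or_antimono_shift:
  "mono f \<or> antimono f \<Longrightarrow> mono (\<lambda>l. f (l - u)) \<or> antimono (\<lambda>l. f (l - u :: real))"
  by (auto simp: mono_def antimono_def)

lemma stieltjes_sum_sorted_diff_le:
  fixes xs ys :: "real list" and z :: complex
  assumes sx: "sorted xs" and sy: "sorted ys" and lx: "length xs = n" and ly: "length ys = n"
    and cnt1: "\<And>t. length (filter (\<lambda>y. y \<le> t) ys) \<le> length (filter (\<lambda>x. x \<le> t) xs) + r"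
    and cnt2: "\<And>t. length (filter (\<lambda>y. y \<le> t) xs) \<le> length (filter (\<lambda>x. x \<le> t) ys) + r"
    and z: "Im z > 0"
  shows "cmod ((\<Sum>i<n. 1 / (of_real (xs ! i) - z)) - (\<Sum>i<n. 1 / (of_real (ys ! i) - z)))
    \<le> 10 * real r / Im z"
proof -
  define u v where "u = Re z" and "v = Im z"
  have v: "v > 0" using z v_def by simp
  define \<Delta> where "\<Delta> f = (\<Sum>i<n. f (xs ! i - u)) - (\<Sum>i<n. f (ys ! i - u))" for f :: "real \<Rightarrow> real"
  have bound: "\<bar>\<Delta> f\<bar> \<le> 2 * real r / v" if "mono f \<or> antimono f" "\<And>s. \<bar>f s\<bar> \<le> 1 / v" for f
    using sum_monotone_fun_sorted_abs_diff_le[OF sx sy lx ly cnt1 cnt2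
        mono_or_antimono_shift[OF that(1), of u] that(2)]
    unfolding \<Delta>_def by simp
  have "\<Delta> (conj_poisson_kernel v) = \<Delta> (\<lambda>s. conj_poisson_kernel v (min s (- v)))
      + \<Delta> (\<lambda>s. conj_poisson_kernel v (max (min s v) (- v))) + \<Delta> (\<lambda>s. conj_poisson_kernel v (max s v))"
    unfolding \<Delta>_def by (subst (1 2) conj_poisson_kernel_split[OF v]) (simp add: sum.distrib)
  moreover have "\<bar>\<Delta> (\<lambda>s. conj_poisson_kernel v (min s (- v)))\<bar> \<le> 2 * real r / v"
    "\<bar>\<Delta> (\<lambda>s. conj_poisson_kernel v (max (min s v) (- v)))\<bar> \<le> 2 * real r / v"
    "\<bar>\<Delta> (\<lambda>s. conj_poisson_kernel v (max s v))\<bar> \<le> 2 * real r / v"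
    using antimono_conj_poisson_kernel_low[OF v] mono_conj_poisson_kernel_middle[OF v]
      antimono_conj_poisson_kernel_high[OF v]
    by (auto intro!: bound abs_conj_poisson_kernel_le[OF v])
  ultimately have re: "\<bar>\<Delta> (conj_poisson_kernel v)\<bar> \<le> 6 * real r / v"
    by (simp add: abs_le_iff)
  have "\<Delta> (poisson_kernel v) = \<Delta> (\<lambda>s. poisson_kernel v (min s 0)) + \<Delta> (\<lambda>s. poisson_kernel v (max s 0))"
    unfolding \<Delta>_def by (subst (1 2) poisson_kernel_split[OF v]) (simp add: sum.distrib sum_subtractf)
  moreover have "\<bar>\<Delta> (\<lambda>s. poisson_kernel v (min s 0))\<bar> \<le> 2 * real r / v"
    "\<bar>\<Delta> (\<lambda>s. poisson_kernel v (max s 0))\<bar> \<le> 2 * real r / v"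
    using mono_poisson_kernel_low[OF v] antimono_poisson_kernel_high[OF v]
    by (auto intro!: bound abs_poisson_kernel_le[OF v])
  ultimately have im: "\<bar>\<Delta> (poisson_kernel v)\<bar> \<le> 4 * real r / v"
    by (simp add: abs_le_iff)
  have "(\<Sum>i<n. 1 / (of_real (xs ! i) - z)) - (\<Sum>i<n. 1 / (of_real (ys ! i) - z))
      = Complex (\<Delta> (conj_poisson_kernel v)) (\<Delta> (poisson_kernel v))"
    unfolding inverse_real_minus_complex \<Delta>_def u_def v_def by (simp add: complex_eq_iff Re_sum Im_sum)
  then show ?thesis
    using cmod_le[of "Complex (\<Delta> (conj_poisson_kernel v)) (\<Delta> (poisson_kernel v))"] re im
    unfolding v_def by simp
qed

section \<open>Spectral statistics under a finite-rank perturbation\<close>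

lemma sq_singval_count_diff_le_mrank:
  fixes M1 M2 :: "complex mat"
  assumes M1: "M1 \<in> carrier_mat n p" and M2: "M2 \<in> carrier_mat n p"
  shows "\<bar>real (sq_singval_count M1 x) - real (sq_singval_count M2 x)\<bar> \<le> real (mrank (M1 - M2))"
proof -
  obtain bs where bs: "set bs \<subseteq> carrier_vec n" and len: "length bs \<le> mrank (M1 - M2)"
    and ker: "\<And>v. v \<in> carrier_vec n \<Longrightarrow> (\<forall>b\<in>set bs. v \<bullet>c b = 0) \<Longrightarrow>
                mat_adjoint (M1 - M2) *\<^sub>v v = 0\<^sub>v p"
    by (rule mrank_orthogonal_kernel[OF minus_carrier_mat[OF M2]]) blast
  have agree: "mat_adjoint M1 *\<^sub>v v = mat_adjoint M2 *\<^sub>v v"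
    if "v \<in> carrier_vec n" "\<forall>b\<in>set bs. v \<bullet>c b = 0" for v
  proof -
    have diff: "mat_adjoint M1 *\<^sub>v v - mat_adjoint M2 *\<^sub>v v = 0\<^sub>v p"
      using ker[OF that] M1 M2 that(1)
      by (simp add: mat_adjoint_minus[OF M1 M2] minus_mult_distrib_mat_vec[of _ p n])
    have "(mat_adjoint M1 *\<^sub>v v) $ i = (mat_adjoint M2 *\<^sub>v v) $ i" if i: "i < p" for i
    proof -
      have "(mat_adjoint M1 *\<^sub>v v - mat_adjoint M2 *\<^sub>v v) $ i = 0" unfolding diff using i by simp
      then show ?thesis using M1 M2 i by simp
    qed
    then show ?thesis using M1 M2 by (intro eq_vecI) auto
  qed
  show ?thesis
    using sq_singval_count_le_of_agree[OF M1 M2 bs agree, of x]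
      sq_singval_count_le_of_agree[OF M2 M1 bs agree[symmetric], of x] len
    by linarith
qed

lemma esd_diff_le_mrank:
  fixes M1 M2 :: "complex mat"
  assumes "M1 \<in> carrier_mat n p" "M2 \<in> carrier_mat n p"
  shows "\<bar>esd n M1 x - esd n M2 x\<bar> \<le> real (mrank (M1 - M2)) / real n"
  using sq_singval_count_diff_le_mrank[OF assms, of x]
  unfolding esd_def sq_singval_count_def[symmetric]
  by (simp add: diff_divide_distrib[symmetric] abs_div divide_right_mono)

lemma sq_singvals_sorted:
  fixes M :: "complex mat"
  assumes "M \<in> carrier_mat n p"
  obtains xs where "sorted xs" "length xs = n" "sq_singvals M = mset (map complex_of_real xs)"
proof -
  obtain U d where "sq_singvals M = mset (map (\<lambda>k. complex_of_real (d k)) [0..<n])"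
    by (rule sq_singvals_spectral[OF assms]) blast
  moreover have "mset (map complex_of_real (sort (map d [0..<n]))) = mset (map (\<lambda>k. complex_of_real (d k)) [0..<n])"
    by (simp add: mset_map image_mset.compositionality comp_def)
  ultimately show ?thesis using that[of "sort (map d [0..<n])"] by simp
qed

lemma stieltjes_diff_le_mrank:
  fixes M1 M2 :: "complex mat"
  assumes M1: "M1 \<in> carrier_mat n p" and M2: "M2 \<in> carrier_mat n p" and z: "Im z > 0"
  shows "cmod (stieltjes n M1 z - stieltjes n M2 z) \<le> 10 * real (mrank (M1 - M2)) / (real n * Im z)"
proof -
  obtain xs where sx: "sorted xs" and lx: "length xs = n" and svx: "sq_singvals M1 = mset (map complex_of_real xs)"
    by (rule sq_singvals_sorted[OF M1])
  obtain ys where sy: "sorted ys" and ly: "length ys = n" and svy: "sq_singvals M2 = mset (map complex_of_real ys)"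
    by (rule sq_singvals_sorted[OF M2])
  have cnt: "sq_singval_count M t = length (filter (\<lambda>y. y \<le> t) zs)"
    if "sq_singvals M = mset (map complex_of_real zs)" for M t zs
    unfolding sq_singval_count_def that by (induction zs) auto
  have sum: "\<Sum>\<^sub># (image_mset (\<lambda>l. 1 / (l - z)) (sq_singvals M)) = (\<Sum>i<n. 1 / (complex_of_real (zs ! i) - z))"
    if "sq_singvals M = mset (map complex_of_real zs)" "length zs = n" for M zs
    unfolding that(1) mset_map[symmetric] sum_mset_sum_list using that(2)
    by (simp add: sum_list_sum_nth atLeast0LessThan)
  have "length (filter (\<lambda>y. y \<le> t) ys) \<le> length (filter (\<lambda>x. x \<le> t) xs) + mrank (M1 - M2)"
    "length (filter (\<lambda>y. y \<le> t) xs) \<le> length (filter (\<lambda>x. x \<le> t) ys) + mrank (M1 - M2)" for t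
    using sq_singval_count_diff_le_mrank[OF M1 M2, of t] unfolding cnt[OF svx] cnt[OF svy] by linarith+
  then have "cmod ((\<Sum>i<n. 1 / (of_real (xs ! i) - z)) - (\<Sum>i<n. 1 / (of_real (ys ! i) - z)))
      \<le> 10 * real (mrank (M1 - M2)) / Im z"
    by (rule stieltjes_sum_sorted_diff_le[OF sx sy lx ly _ _ z])
  from divide_right_mono[OF this, of "real n"] show ?thesis
    unfolding stieltjes_def sum[OF svx lx] sum[OF svy ly]
    by (simp add: diff_divide_distrib[symmetric] norm_divide divide_divide_eq_left mult.commute)
qed

section \<open>Truncation of the entries\<close>

lemma real_card_pairs_eq_sum_indicator:
  fixes J K :: nat
  shows "real (card {(j,k). j < J \<and> k < K \<and> P j k}) = (\<Sum>j<J. \<Sum>k<K. of_bool (P j k))"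
proof -
  have eq: "{(j,k). j < J \<and> k < K \<and> P j k} = Sigma {..<J} (\<lambda>j. {k. k < K \<and> P j k})" by auto
  have "card {(j,k). j < J \<and> k < K \<and> P j k} = (\<Sum>j<J. card {k. k < K \<and> P j k})"
    unfolding eq by (rule card_SigmaI) auto
  moreover have "real (card {k. k < K \<and> P j k}) = (\<Sum>k<K. of_bool (P j k))" for j
    using sum.If_cases[of "{..<K}" "P j" "\<lambda>_. 1::real" "\<lambda>_. 0"] by (simp add: of_bool_def Int_def conj_commute)
  ultimately show ?thesis by simp
qed

lemma mrank_rmat_diff_trunc_le:
  "real (mrank (rmat N X n \<omega> q - rmat N (trunc \<tau> X) n \<omega> q))
     \<le> (\<Sum>j<N n (q - 1). \<Sum>k<N n q. indicator {t. t > \<tau> n * sqrt (real n)} (cmod (X n q j k \<omega>)))"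
proof -
  let ?D = "rmat N X n \<omega> q - rmat N (trunc \<tau> X) n \<omega> q"
  have D: "?D \<in> carrier_mat (N n (q - 1)) (N n q)" unfolding rmat_def by (rule minus_carrier_mat) simp
  have "{(j,k). j < N n (q - 1) \<and> k < N n q \<and> ?D $$ (j,k) \<noteq> 0}
      \<subseteq> {(j,k). j < N n (q - 1) \<and> k < N n q \<and> cmod (X n q j k \<omega>) > \<tau> n * sqrt (real n)}"
    by (auto simp: rmat_def trunc_def split: if_splits)
  moreover have "finite {(j,k). j < N n (q - 1) \<and> k < N n q \<and> cmod (X n q j k \<omega>) > \<tau> n * sqrt (real n)}"
    by (rule finite_subset[of _ "{..<N n (q - 1)} \<times> {..<N n q}"]) auto
  ultimately have "mrank ?D \<le> card {(j,k). j < N n (q - 1) \<and> k < N n q \<and> cmod (X n q j k \<omega>) > \<tau> n * sqrt (real n)}"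
    using mrank_le_card_nonzero_entries[OF D] card_mono le_trans by blast
  then have "real (mrank ?D)
      \<le> real (card {(j,k). j < N n (q - 1) \<and> k < N n q \<and> \<tau> n * sqrt (real n) < cmod (X n q j k \<omega>)})"
    by simp
  also have "\<dots> = (\<Sum>j<N n (q - 1). \<Sum>k<N n q. indicator {t. t > \<tau> n * sqrt (real n)} (cmod (X n q j k \<omega>)))"
    unfolding real_card_pairs_eq_sum_indicator by (simp add: indicator_def)
  finally show ?thesis .
qed

lemma nn_integral_indicator_gt_le:
  fixes X :: "'a \<Rightarrow> complex"
  assumes X: "X \<in> borel_measurable M" and int: "integrable M (\<lambda>\<omega>. (cmod (X \<omega>))^2)" and a: "a > 0"
  shows "(\<integral>\<^sup>+\<omega>. ennreal (indicator {t. t > a} (cmod (X \<omega>))) \<partial>M)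
     \<le> ennreal ((\<integral>\<omega>. (cmod (X \<omega>))^2 * indicator {t. t > a} (cmod (X \<omega>)) \<partial>M) / a^2)"
proof -
  define g where "g \<omega> = (cmod (X \<omega>))^2 * indicator {t. t > a} (cmod (X \<omega>)) / a^2" for \<omega>
  have "g \<in> borel_measurable M" unfolding g_def using X by measurable
  then have "integrable M g"
    by (intro Bochner_Integration.integrable_bound[OF integrable_divide[OF int, of "a^2"]])
      (auto simp: g_def indicator_def)
  have "ennreal (indicator {t. t > a} (cmod (X \<omega>))) \<le> ennreal (g \<omega>)" for \<omega>
  proof (cases "cmod (X \<omega>) > a")
    case True
    then have "a^2 \<le> (cmod (X \<omega>))^2" using a by (intro power_mono) auto
    then show ?thesis using True a unfolding g_def by (simp add: indicator_def)
  qed (simp add: g_def indicator_def)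
  then have "(\<integral>\<^sup>+\<omega>. ennreal (indicator {t. t > a} (cmod (X \<omega>))) \<partial>M) \<le> (\<integral>\<^sup>+\<omega>. ennreal (g \<omega>) \<partial>M)"
    by (rule nn_integral_mono)
  also have "\<dots> = ennreal (integral\<^sup>L M g)"
    by (rule nn_integral_eq_integral[OF \<open>integrable M g\<close>]) (auto simp: g_def indicator_def)
  also have "integral\<^sup>L M g = (\<integral>\<omega>. (cmod (X \<omega>))^2 * indicator {t. t > a} (cmod (X \<omega>)) \<partial>M) / a^2"
    unfolding g_def by simp
  finally show ?thesis .
qed

definition exceed_count ::
  "nat \<Rightarrow> (nat \<Rightarrow> nat \<Rightarrow> nat) \<Rightarrow> (nat \<Rightarrow> nat \<Rightarrow> nat \<Rightarrow> nat \<Rightarrow> 'a \<Rightarrow> complex) \<Rightarrow> nat \<Rightarrow> real \<Rightarrow> 'a \<Rightarrow> real" where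
  "exceed_count m N X n a \<omega> =
     (\<Sum>q\<in>{1..m}. \<Sum>j<N n (q - 1). \<Sum>k<N n q. indicator {t. t > a} (cmod (X n q j k \<omega>)))"

lemma nn_integral_exceed_count_le:
  assumes meas: "\<And>q j k. X n q j k \<in> borel_measurable (M n)"
    and int: "\<And>q j k. q \<in> {1..m} \<Longrightarrow> j < N n (q - 1) \<Longrightarrow> k < N n q \<Longrightarrow>
                integrable (M n) (\<lambda>\<omega>. (cmod (X n q j k \<omega>))^2)"
    and t: "t > 0" and n: "n > 0"
  shows "(\<integral>\<^sup>+\<omega>. ennreal (exceed_count m N X n (t * sqrt (real n)) \<omega>) \<partial>M n)
           \<le> ennreal (real n * lindeberg M m N X n t / t^2)"
proof -
  define a where "a = t * sqrt (real n)"
  have a: "a > 0" and a2: "a^2 = t^2 * real n" unfolding a_def using t n by (auto simp: power_mult_distrib)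
  define E where "E q j k = (\<integral>\<omega>. (cmod (X n q j k \<omega>))^2 * indicator {t. t > a} (cmod (X n q j k \<omega>)) \<partial>M n)" for q j k
  have "(\<integral>\<^sup>+\<omega>. ennreal (exceed_count m N X n a \<omega>) \<partial>M n)
      = (\<Sum>q\<in>{1..m}. \<Sum>j<N n (q - 1). \<Sum>k<N n q. \<integral>\<^sup>+\<omega>. ennreal (indicator {t. t > a} (cmod (X n q j k \<omega>))) \<partial>M n)"
    unfolding exceed_count_def using meas
    by (simp add: nn_integral_sum sum_nonneg del: sum_ennreal flip: sum_ennreal)
  also have "\<dots> \<le> (\<Sum>q\<in>{1..m}. \<Sum>j<N n (q - 1). \<Sum>k<N n q. ennreal (E q j k / a^2))"
    unfolding E_def by (intro sum_mono nn_integral_indicator_gt_le[OF meas int a]) auto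
  also have "\<dots> = ennreal ((\<Sum>q\<in>{1..m}. \<Sum>j<N n (q - 1). \<Sum>k<N n q. E q j k) / a^2)"
    unfolding E_def by (simp add: sum_nonneg integral_nonneg_AE sum_divide_distrib)
  also have "(\<Sum>q\<in>{1..m}. \<Sum>j<N n (q - 1). \<Sum>k<N n q. E q j k) / a^2 = real n * lindeberg M m N X n t / t^2"
    unfolding lindeberg_def E_def a2 a_def using n t by (simp add: power2_eq_square field_simps)
  finally show ?thesis unfolding a_def .
qed

lemma nn_integral_le_by_count:
  fixes f :: "'a \<Rightarrow> ennreal" and g :: "'a \<Rightarrow> real"
  assumes f: "\<And>\<omega>. f \<omega> \<le> ennreal (c * g \<omega>)" and c: "0 \<le> c"
    and g: "g \<in> borel_measurable M" and b: "(\<integral>\<^sup>+\<omega>. ennreal (g \<omega>) \<partial>M) \<le> ennreal b"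
  shows "(\<integral>\<^sup>+\<omega>. f \<omega> \<partial>M) \<le> ennreal (c * b)"
proof -
  have "(\<integral>\<^sup>+\<omega>. f \<omega> \<partial>M) \<le> (\<integral>\<^sup>+\<omega>. ennreal c * ennreal (g \<omega>) \<partial>M)"
    using f c by (intro nn_integral_mono) (simp add: ennreal_mult')
  also have "\<dots> = ennreal c * (\<integral>\<^sup>+\<omega>. ennreal (g \<omega>) \<partial>M)"
    using g by (simp add: nn_integral_cmult)
  also have "\<dots> \<le> ennreal (c * b)"
    using mult_left_mono[OF b] c by (simp add: ennreal_mult')
  finally show ?thesis .
qed

lemma mrank_trunc_perturbation_le:
  fixes F :: "(nat \<Rightarrow> complex mat) \<Rightarrow> complex mat"
  assumes rank: "\<forall>A Bm. (\<forall>q\<in>{1..m}. A q \<in> carrier_mat (N n (q - 1)) (N n q) \<and>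
                   Bm q \<in> carrier_mat (N n (q - 1)) (N n q)) \<longrightarrow>
                 real (mrank (F A - F Bm)) \<le> CF * (\<Sum>q\<in>{1..m}. real (mrank (A q - Bm q)))"
    and F: "F (rmat N X n \<omega>) \<in> carrier_mat r p" "F (rmat N (trunc \<tau> X) n \<omega>) \<in> carrier_mat r p"
    and B: "B \<in> carrier_mat r p"
  shows "real (mrank ((F (rmat N X n \<omega>) + B) - (F (rmat N (trunc \<tau> X) n \<omega>) + B)))
           \<le> max CF 0 * exceed_count m N X n (\<tau> n * sqrt (real n)) \<omega>"
proof -
  let ?r = "\<Sum>q\<in>{1..m}. real (mrank (rmat N X n \<omega> q - rmat N (trunc \<tau> X) n \<omega> q))"
  have "(F (rmat N X n \<omega>) + B) - (F (rmat N (trunc \<tau> X) n \<omega>) + B) = F (rmat N X n \<omega>) - F (rmat N (trunc \<tau> X) n \<omega>)"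
    using F B by (intro eq_matI) auto
  moreover have "\<forall>q\<in>{1..m}. rmat N X n \<omega> q \<in> carrier_mat (N n (q - 1)) (N n q) \<and>
      rmat N (trunc \<tau> X) n \<omega> q \<in> carrier_mat (N n (q - 1)) (N n q)"
    by (simp add: rmat_def)
  ultimately have "real (mrank ((F (rmat N X n \<omega>) + B) - (F (rmat N (trunc \<tau> X) n \<omega>) + B))) \<le> CF * ?r"
    using rank by simp
  also have "\<dots> \<le> max CF 0 * ?r" by (rule mult_right_mono) (auto intro: sum_nonneg)
  also have "\<dots> \<le> max CF 0 * exceed_count m N X n (\<tau> n * sqrt (real n)) \<omega>"
    unfolding exceed_count_def by (intro mult_left_mono sum_mono mrank_rmat_diff_trunc_le) auto
  finally show ?thesis .
qed

lemma nn_integral_sup_esd_diff_le: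
  fixes Y Yt :: "'a \<Rightarrow> complex mat" and g :: "'a \<Rightarrow> real"
  assumes Y: "\<And>\<omega>. Y \<omega> \<in> carrier_mat n p" "\<And>\<omega>. Yt \<omega> \<in> carrier_mat n p"
    and rank: "\<And>\<omega>. real (mrank (Y \<omega> - Yt \<omega>)) \<le> c * g \<omega>" and c: "0 \<le> c"
    and g: "g \<in> borel_measurable M" "(\<integral>\<^sup>+\<omega>. ennreal (g \<omega>) \<partial>M) \<le> ennreal b"
  shows "(\<integral>\<^sup>+\<omega>. (SUP x. ennreal \<bar>esd n (Y \<omega>) x - esd n (Yt \<omega>) x\<bar>) \<partial>M) \<le> ennreal (c / real n * b)"
proof (rule nn_integral_le_by_count[OF _ _ g])
  fix \<omega>
  have "\<bar>esd n (Y \<omega>) x - esd n (Yt \<omega>) x\<bar> \<le> c / real n * g \<omega>" for x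
    using order.trans[OF esd_diff_le_mrank[OF Y(1)[of \<omega>] Y(2)[of \<omega>]]
        divide_right_mono[OF rank[of \<omega>], of "real n"]] by simp
  then show "(SUP x. ennreal \<bar>esd n (Y \<omega>) x - esd n (Yt \<omega>) x\<bar>) \<le> ennreal (c / real n * g \<omega>)"
    by (intro SUP_least ennreal_leI)
qed (use c in simp)

lemma nn_integral_stieltjes_diff_le:
  fixes Y Yt :: "'a \<Rightarrow> complex mat" and g :: "'a \<Rightarrow> real"
  assumes Y: "\<And>\<omega>. Y \<omega> \<in> carrier_mat n p" "\<And>\<omega>. Yt \<omega> \<in> carrier_mat n p"
    and rank: "\<And>\<omega>. real (mrank (Y \<omega> - Yt \<omega>)) \<le> c * g \<omega>" and c: "0 \<le> c"
    and g: "g \<in> borel_measurable M" "(\<integral>\<^sup>+\<omega>. ennreal (g \<omega>) \<partial>M) \<le> ennreal b"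
    and z: "Im z > 0"
  shows "(\<integral>\<^sup>+\<omega>. ennreal (cmod (stieltjes n (Y \<omega>) z - stieltjes n (Yt \<omega>) z)) \<partial>M)
           \<le> ennreal (10 * c / (real n * Im z) * b)"
proof (rule nn_integral_le_by_count[OF _ _ g])
  fix \<omega>
  have "10 * real (mrank (Y \<omega> - Yt \<omega>)) / (real n * Im z) \<le> 10 * (c * g \<omega>) / (real n * Im z)"
    using rank[of \<omega>] z by (intro divide_right_mono) auto
  from order.trans[OF stieltjes_diff_le_mrank[OF Y(1)[of \<omega>] Y(2)[of \<omega>] z] this]
  show "ennreal (cmod (stieltjes n (Y \<omega>) z - stieltjes n (Yt \<omega>) z)) \<le> ennreal (10 * c / (real n * Im z) * g \<omega>)"
    by (intro ennreal_leI) simp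
qed (use c z in simp)

theorem lemma3p1:
  fixes m :: nat
    and N :: "nat \<Rightarrow> nat \<Rightarrow> nat"
    and y :: "nat \<Rightarrow> real"
    and M :: "nat \<Rightarrow> 'a measure"
    and X :: "nat \<Rightarrow> nat \<Rightarrow> nat \<Rightarrow> nat \<Rightarrow> 'a \<Rightarrow> complex"
    and F :: "nat \<Rightarrow> (nat \<Rightarrow> complex mat) \<Rightarrow> complex mat"
    and \<tau> :: "nat \<Rightarrow> real"
    and B :: "nat \<Rightarrow> complex mat"
  assumes m_pos: "m \<ge> 1"
    and dim0: "\<And>n. N n 0 = n"
    and dim_pos: "\<And>n q. n \<ge> 1 \<Longrightarrow> q \<in> {1..m} \<Longrightarrow> N n q > 0"
    and ratio: "\<And>q. q \<in> {1..m} \<Longrightarrow> y q > 0 \<and> (\<lambda>n. real n / real (N n q)) \<longlonglongrightarrow> y q"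
    and prob: "\<And>n. prob_space (M n)"
    and meas: "\<And>n q j k. X n q j k \<in> borel_measurable (M n)"
    and indep: "\<And>n. n \<ge> 1 \<Longrightarrow> prob_space.indep_vars (M n) (\<lambda>_. borel)
                  (\<lambda>(q, j, k). X n q j k) {(q, j, k). q \<in> {1..m} \<and> j < N n (q - 1) \<and> k < N n q}"
    and sq_int: "\<And>n q j k. n \<ge> 1 \<Longrightarrow> q \<in> {1..m} \<Longrightarrow> j < N n (q - 1) \<Longrightarrow> k < N n q \<Longrightarrow>
                  integrable (M n) (\<lambda>\<omega>. (cmod (X n q j k \<omega>))^2)"
    and mean0: "\<And>n q j k. n \<ge> 1 \<Longrightarrow> q \<in> {1..m} \<Longrightarrow> j < N n (q - 1) \<Longrightarrow> k < N n q \<Longrightarrow>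
                  prob_space.expectation (M n) (X n q j k) = 0"
    and var1: "\<And>n q j k. n \<ge> 1 \<Longrightarrow> q \<in> {1..m} \<Longrightarrow> j < N n (q - 1) \<Longrightarrow> k < N n q \<Longrightarrow>
                  prob_space.expectation (M n) (\<lambda>\<omega>. (cmod (X n q j k \<omega>))^2) = 1"
    and F_dim: "\<And>n Z. n \<ge> 1 \<Longrightarrow> (\<forall>q\<in>{1..m}. Z q \<in> carrier_mat (N n (q - 1)) (N n q)) \<Longrightarrow>
                  F n Z \<in> carrier_mat n (N n m)"
    and lindeberg_cond: "\<And>t. t > 0 \<Longrightarrow> (\<lambda>n. lindeberg M m N X n t) \<longlonglongrightarrow> 0"
    and rank_cond: "\<exists>CF::real. \<forall>n\<ge>1. \<forall>A Bm.
                  (\<forall>q\<in>{1..m}. A q \<in> carrier_mat (N n (q - 1)) (N n q) \<and>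
                               Bm q \<in> carrier_mat (N n (q - 1)) (N n q)) \<longrightarrow>
                  real (mrank (F n A - F n Bm)) \<le> CF * (\<Sum>q\<in>{1..m}. real (mrank (A q - Bm q)))"
    and tau_lim: "\<tau> \<longlonglongrightarrow> 0"
    and tau_lind: "(\<lambda>n. lindeberg M m N X n (\<tau> n) / (\<tau> n)^4) \<longlonglongrightarrow> 0"
    and tau_low: "\<And>n. n \<ge> 1 \<Longrightarrow> \<tau> n \<ge> real n powr (-1/3)"
    and B_dim: "\<And>n. n \<ge> 1 \<Longrightarrow> B n \<in> carrier_mat n (N n m)"
  shows "\<exists>C::real. \<forall>n\<ge>1.
     (\<integral>\<^sup>+ \<omega>. (SUP x::real. ennreal \<bar>esd n (F n (rmat N X n \<omega>) + B n) x
                                   - esd n (F n (rmat N (trunc \<tau> X) n \<omega>) + B n) x\<bar>) \<partial>M n)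
        \<le> ennreal (C * (\<tau> n)^2)
     \<and> (\<forall>z. Im z > 0 \<longrightarrow>
        (\<integral>\<^sup>+ \<omega>. ennreal (cmod (stieltjes n (F n (rmat N X n \<omega>) + B n) z
                               - stieltjes n (F n (rmat N (trunc \<tau> X) n \<omega>) + B n) z)) \<partial>M n)
        \<le> ennreal (C / Im z * (\<tau> n)^2))"
proof -
  obtain CF where CF: "\<forall>n\<ge>1. \<forall>A Bm. (\<forall>q\<in>{1..m}. A q \<in> carrier_mat (N n (q - 1)) (N n q) \<and>
      Bm q \<in> carrier_mat (N n (q - 1)) (N n q)) \<longrightarrow>
      real (mrank (F n A - F n Bm)) \<le> CF * (\<Sum>q\<in>{1..m}. real (mrank (A q - Bm q)))"
    using rank_cond by blast
  define C0 where "C0 = max CF 0"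
  define L where "L n = lindeberg M m N X n (\<tau> n)" for n
  obtain K where K: "K > 0" "\<And>n. norm (L n / (\<tau> n)^4) \<le> K"
    using convergent_imp_Bseq[OF convergentI[OF tau_lind]] unfolding L_def by (auto elim: BseqE)
  have C0: "C0 \<ge> 0" unfolding C0_def by simp
  show ?thesis
  proof (intro exI[of _ "10 * C0 * K"] allI impI conjI)
    fix n :: nat assume n: "n \<ge> 1"
    have "real n powr (-1/3) > 0" using n by simp
    then have \<tau>: "\<tau> n > 0" using tau_low[OF n] by linarith
    define cnt where "cnt = exceed_count m N X n (\<tau> n * sqrt (real n))"
    have F_carrier: "F n (rmat N X n \<omega>) \<in> carrier_mat n (N n m)" "F n (rmat N (trunc \<tau> X) n \<omega>) \<in> carrier_mat n (N n m)"
      for \<omega> using F_dim[OF n] by (simp_all add: rmat_def)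
    have carrier: "F n (rmat N X n \<omega>) + B n \<in> carrier_mat n (N n m)"
      "F n (rmat N (trunc \<tau> X) n \<omega>) + B n \<in> carrier_mat n (N n m)" for \<omega>
      using F_carrier B_dim[OF n] by auto
    note rank = mrank_trunc_perturbation_le[OF mp[OF spec[OF CF, of n] n] F_carrier B_dim[OF n], folded C0_def cnt_def]
    have cnt_meas: "cnt \<in> borel_measurable (M n)" unfolding cnt_def exceed_count_def using meas by measurable
    have cnt_int: "(\<integral>\<^sup>+\<omega>. ennreal (cnt \<omega>) \<partial>M n) \<le> ennreal (real n * L n / (\<tau> n)^2)"
      unfolding cnt_def L_def using n \<tau> by (intro nn_integral_exceed_count_le meas sq_int) auto
    have "L n / (\<tau> n)^4 \<le> K" using abs_le_D1[OF K(2)[of n, unfolded real_norm_def]] .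
    then have lindeberg_bound: "C0 * (L n / (\<tau> n)^2) \<le> C0 * K * (\<tau> n)^2"
      using \<tau> C0 by (simp add: divide_le_eq power_add[of "\<tau> n" 2 2, simplified] mult.assoc mult_left_mono)
    have "0 \<le> C0 * K * (\<tau> n)^2" using C0 K(1) by simp
    then show "(\<integral>\<^sup>+\<omega>. (SUP x. ennreal \<bar>esd n (F n (rmat N X n \<omega>) + B n) x
                 - esd n (F n (rmat N (trunc \<tau> X) n \<omega>) + B n) x\<bar>) \<partial>M n) \<le> ennreal (10 * C0 * K * (\<tau> n)^2)"
      using lindeberg_bound n by (intro order.trans[OF nn_integral_sup_esd_diff_le[OF carrier rank C0 cnt_meas cnt_int]] ennreal_leI)
        (simp add: mult.assoc)
    fix z :: complex assume z: "Im z > 0"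
    show "(\<integral>\<^sup>+\<omega>. ennreal (cmod (stieltjes n (F n (rmat N X n \<omega>) + B n) z
             - stieltjes n (F n (rmat N (trunc \<tau> X) n \<omega>) + B n) z)) \<partial>M n) \<le> ennreal (10 * C0 * K / Im z * (\<tau> n)^2)"
      using divide_right_mono[OF lindeberg_bound, of "Im z / 10"] n z
      by (intro order.trans[OF nn_integral_stieltjes_diff_le[OF carrier rank C0 cnt_meas cnt_int z]] ennreal_leI)
        (simp add: field_simps)
  qed
qed

end
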